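(* Let $d\in\mathbb{N}^+$, $a<b$, and let $N\ge 36d(2d+1)$ and $L\ge 11$ be integers. Then $\mathscr{H}_d(N,L)$ (restricted to $[a,b]^d$) is dense in $C([a,b]^d)$ with respect to the maximum norm.
   Context: Let $\sigma_1:\mathbb{R}\to\mathbb{R}$ be the continuous triangular-wave function of period $2$: $\sigma_1(x)=|x|$ for $x\in[-1,1]$ and $\sigma_1(x+2)=\sigma_1(x)$ for all $x$. Let $\sigma_2(x)=x/(|x|+1)$. The activation function is $\sigma(x)=\sigma_1(x)$ for $x\ge 0$ and $\sigma(x)=\sigma_2(x)$ for $x<0$, applied to vectors entrywise. For $N,L\in\mathbb{N}^+$, $\mathscr{H}_d(N,L)$ is the set of all functions $\phi:\mathbb{R}^d\to\mathbb{R}$ of the form $\phi=\mathcal{L}_L\circ\sigma\circ\mathcal{L}_{L-1}\circ\cdots\circ\sigma\circ\mathcal{L}_1\circ\sigma\circ\mathcal{L}_0$, where $\mathcal{L}_0:\mathbb{R}^d\to\mathbb{R}^N$, $\mathcal{L}_i:\mathbb{R}^N\to\mathbb{R}^N$ ($1\le i\le L-1$), $\mathcal{L}_L:\mathbb{R}^N\to\mathbb{R}$ are arbitrary affine maps. *)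

theory Defs
  imports "HOL-Analysis.Analysis"
begin

text \<open>Triangular wave of period 2: equals abs x on [-1,1], 2-periodic.\<close>
definition sigma1 :: "real \<Rightarrow> real" where
  "sigma1 x = \<bar>x - 2 * of_int \<lfloor>(x + 1) / 2\<rfloor>\<bar>"

definition sigma2 :: "real \<Rightarrow> real" where
  "sigma2 x = x / (\<bar>x\<bar> + 1)"

definition act :: "real \<Rightarrow> real" where
  "act x = (if x \<ge> 0 then sigma1 x else sigma2 x)"

text \<open>Vectors in R^N are represented as nat => real, only indices < N are used.
  An affine map R^m -> R^N is given by weights W and bias c.\<close>
definition affine_nat :: "nat \<Rightarrow> nat \<Rightarrow> (nat \<Rightarrow> nat \<Rightarrow> real) \<Rightarrow> (nat \<Rightarrow> real)
    \<Rightarrow> (nat \<Rightarrow> real) \<Rightarrow> (nat \<Rightarrow> real)" where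
  "affine_nat N m W c y = (\<lambda>i. if i < N then (\<Sum>j<m. W i j * y j) + c i else 0)"

definition affine_in :: "nat \<Rightarrow> (nat \<Rightarrow> 'd::finite \<Rightarrow> real) \<Rightarrow> (nat \<Rightarrow> real)
    \<Rightarrow> real^'d \<Rightarrow> (nat \<Rightarrow> real)" where
  "affine_in N W c x = (\<lambda>i. if i < N then (\<Sum>j\<in>UNIV. W i j * x $ j) + c i else 0)"

fun hidden_out :: "nat \<Rightarrow> (nat \<Rightarrow> 'd::finite \<Rightarrow> real) \<Rightarrow> (nat \<Rightarrow> real)
    \<Rightarrow> (nat \<Rightarrow> nat \<Rightarrow> nat \<Rightarrow> real) \<Rightarrow> (nat \<Rightarrow> nat \<Rightarrow> real)
    \<Rightarrow> real^'d \<Rightarrow> nat \<Rightarrow> (nat \<Rightarrow> real)" where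
  "hidden_out N W0 c0 W c x 0 = (\<lambda>i. act (affine_in N W0 c0 x i))"
| "hidden_out N W0 c0 W c x (Suc k) =
     (\<lambda>i. act (affine_nat N N (W (Suc k)) (c (Suc k)) (hidden_out N W0 c0 W c x k) i))"

definition H :: "nat \<Rightarrow> nat \<Rightarrow> (real^'d::finite \<Rightarrow> real) set" where
  "H N L = {\<phi>. \<exists>W0 c0 W c (w::nat \<Rightarrow> real) (b::real).
      \<phi> = (\<lambda>x. (\<Sum>j<N. w j * hidden_out N W0 c0 W c x (L - 1) j) + b)}"

end

theory Submission
  imports Defs
begin

text \<open>
  Approximate the target by a function that is constant on the cells of a fine grid. A network
  is continuous, so use \<open>D + 1\<close> copies of the grid, shifted by \<open>1/(D + 1)\<close> of a cell in every
  coordinate, and give copy \<open>j\<close> a continuous weight that vanishes near its cell boundaries; by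
  pigeonhole every point lies well inside a cell of some copy. Well inside a cell, the triangular
  wave \<open>sigma1\<close> computes the integer parts of the rescaled coordinates exactly, and reading them
  as digits in base \<open>n + 3\<close> gives an integer code \<open>K\<close> of the cell.

  A single neuron \<open>act (2 t (1 + act (- b K)) + C)\<close> reproduces any table \<open>K \<mapsto> \<alpha> K \<in> [0, 1]\<close>
  up to \<open>\<delta>\<close>. Since \<open>1 + sigma2 (- u) = 1 / (1 + u)\<close>, its argument is \<open>2 t / (1 + b K) + C\<close>; for all
  but countably many \<open>b\<close> the numbers \<open>1 / (1 + b K)\<close> are linearly independent over \<open>\<rat>\<close>, so by
  Kronecker's theorem some \<open>t\<close> brings every \<open>t / (1 + b K)\<close> close to \<open>\<alpha> K / 2\<close> modulo \<open>1\<close>, and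
  the \<open>2\<close>-periodic \<open>sigma1\<close> reads off \<open>\<alpha> K\<close>. The network outputs the weighted average of the
  table values of the copies. The products and the division by the total weight in it are exact,
  because reciprocals give squares (\<open>1/y - 1/(y + 1) = 1/(y (y + 1))\<close>) and squares give products.
\<close>

section \<open>The activation function\<close>

lemma sigma1_eq_frac: "sigma1 x = (if even \<lfloor>x\<rfloor> then frac x else 1 - frac x)"
proof -
  define k where "k = \<lfloor>x\<rfloor>"
  have kx: "of_int k \<le> x" "x < of_int k + 1" unfolding k_def by linarith+
  have fr: "frac x = x - of_int k" unfolding k_def frac_def by simp
  show ?thesis
  proof (cases "even k")
    case True
    then obtain q where q: "k = 2 * q" by auto
    have "\<lfloor>(x + 1) / 2\<rfloor> = q" using kx unfolding q by (intro floor_unique) (auto simp: field_simps)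
    then show ?thesis using True fr kx unfolding sigma1_def k_def[symmetric] q by auto
  next
    case False
    then obtain q where q: "k = 2 * q + 1" by (metis oddE)
    have "\<lfloor>(x + 1) / 2\<rfloor> = q + 1" using kx unfolding q
      by (intro floor_unique) (auto simp: field_simps)
    then show ?thesis using False fr kx unfolding sigma1_def k_def[symmetric] q by auto
  qed
qed

lemma sigma1_bounds: "0 \<le> sigma1 x" "sigma1 x \<le> 1"
  unfolding sigma1_eq_frac using frac_ge_0[of x] frac_lt_1[of x] by auto

lemma sigma1_periodic: "sigma1 (x + 2 * of_int k) = sigma1 x"
proof -
  have "\<lfloor>(x + 2 * of_int k + 1) / 2\<rfloor> = \<lfloor>(x + 1) / 2\<rfloor> + k"
    by (metis add.commute add_divide_distrib floor_add_int nonzero_mult_div_cancel_left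
        zero_neq_numeral add.assoc)
  then show ?thesis unfolding sigma1_def by simp
qed

lemma sigma1_le_dist: "sigma1 x \<le> \<bar>x - 2 * of_int k\<bar>"
proof -
  define q where "q = \<lfloor>(x + 1) / 2\<rfloor>"
  have q: "of_int q \<le> (x + 1) / 2" "(x + 1) / 2 < of_int q + 1" unfolding q_def by linarith+
  have s: "sigma1 x = \<bar>x - 2 * of_int q\<bar>" unfolding sigma1_def q_def by simp
  show ?thesis
  proof (cases "k = q")
    case False
    then have "k \<le> q - 1 \<or> k \<ge> q + 1" by linarith
    then have "of_int k \<le> (of_int q :: real) - 1 \<or> of_int k \<ge> (of_int q :: real) + 1"
      by (metis of_int_1 of_int_diff of_int_add of_int_le_iff)
    then show ?thesis using q s by auto
  qed (simp add: s)
qed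

lemma sigma1_lipschitz: "\<bar>sigma1 x - sigma1 y\<bar> \<le> \<bar>x - y\<bar>"
  using sigma1_le_dist[of x "\<lfloor>(y + 1) / 2\<rfloor>"] sigma1_le_dist[of y "\<lfloor>(x + 1) / 2\<rfloor>"]
  unfolding sigma1_def by linarith

lemma sigma1_eq_abs: "\<bar>x\<bar> \<le> 1 \<Longrightarrow> sigma1 x = \<bar>x\<bar>"
proof -
  assume x: "\<bar>x\<bar> \<le> 1"
  define q where "q = \<lfloor>(x + 1) / 2\<rfloor>"
  have "of_int q \<le> (x + 1) / 2" "(x + 1) / 2 < of_int q + 1" unfolding q_def by linarith+
  then have "q = 0 \<or> q = 1" using x by auto
  then have "\<bar>x\<bar> \<le> sigma1 x" using x unfolding sigma1_def q_def[symmetric] by auto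
  moreover have "sigma1 x \<le> \<bar>x\<bar>" using sigma1_le_dist[of x 0] by simp
  ultimately show ?thesis by simp
qed

lemma sigma1_double: "sigma1 (2 * s) = 2 * min (frac s) (1 - frac s)"
proof -
  define k where "k = \<lfloor>s\<rfloor>"
  define f where "f = frac s"
  have sf: "s = of_int k + f" "0 \<le> f" "f < 1"
    unfolding k_def f_def using frac_lt_1[of s] by (auto simp: frac_def)
  show ?thesis
  proof (cases "f < 1/2")
    case True
    have "\<lfloor>2 * s\<rfloor> = 2 * k" using sf True by (intro floor_unique) auto
    moreover have "frac (2 * s) = 2 * f" using sf calculation by (simp add: frac_def)
    ultimately show ?thesis unfolding sigma1_eq_frac using True f_def by simp
  next
    case False
    have "\<lfloor>2 * s\<rfloor> = 2 * k + 1" using sf False by (intro floor_unique) auto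
    moreover have "frac (2 * s) = 2 * f - 1" using sf calculation by (simp add: frac_def)
    ultimately show ?thesis unfolding sigma1_eq_frac using False f_def by simp
  qed
qed

lemma sigma1_shift:
  "sigma1 (s + 3/2) = (if even \<lfloor>s\<rfloor> then \<bar>frac s - 1/2\<bar> else 1 - \<bar>frac s - 1/2\<bar>)"
proof -
  define k where "k = \<lfloor>s\<rfloor>"
  define f where "f = frac s"
  have sf: "s = of_int k + f" "0 \<le> f" "f < 1"
    unfolding k_def f_def using frac_lt_1[of s] by (auto simp: frac_def)
  show ?thesis
  proof (cases "f < 1/2")
    case True
    have fl: "\<lfloor>s + 3/2\<rfloor> = k + 1" using sf True by (intro floor_unique) auto
    moreover have "frac (s + 3/2) = f + 1/2" using sf fl by (simp add: frac_def)
    ultimately show ?thesis unfolding sigma1_eq_frac[of "s + 3/2"] using True f_def k_def by auto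
  next
    case False
    have fl: "\<lfloor>s + 3/2\<rfloor> = k + 2" using sf False by (intro floor_unique) auto
    moreover have "frac (s + 3/2) = f - 1/2" using sf fl by (simp add: frac_def)
    ultimately show ?thesis unfolding sigma1_eq_frac[of "s + 3/2"] using False f_def k_def by auto
  qed
qed

lemma act_nonneg: "0 \<le> x \<Longrightarrow> act x = sigma1 x"
  by (simp add: act_def)

lemma act_unit: "0 \<le> x \<Longrightarrow> x \<le> 1 \<Longrightarrow> act x = x"
  by (simp add: act_nonneg sigma1_eq_abs)

lemma act_bounds: "0 \<le> x \<Longrightarrow> 0 \<le> act x \<and> act x \<le> 1"
  by (simp add: act_nonneg sigma1_bounds)

lemma act_abs: "\<bar>z\<bar> \<le> B \<Longrightarrow> 0 < B \<Longrightarrow> B * act (z / B + 2) = \<bar>z\<bar>"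
proof -
  assume z: "\<bar>z\<bar> \<le> B" "0 < B"
  then have z': "\<bar>z / B\<bar> \<le> 1" by simp
  then have "0 \<le> z / B + 2" using abs_le_D2[OF z'] by linarith
  then have "act (z / B + 2) = sigma1 (z / B + 2 * of_int 1)" by (simp add: act_nonneg)
  also have "\<dots> = \<bar>z / B\<bar>" by (simp only: sigma1_periodic sigma1_eq_abs[OF z'])
  finally show ?thesis using z by simp
qed

lemma act_abs_unit: "\<bar>z\<bar> \<le> 1 \<Longrightarrow> act (z + 2) = \<bar>z\<bar>"
  using act_abs[of z 1] by simp

lemma act_neg_recip: "0 \<le> u \<Longrightarrow> 1 + act (- u) = 1 / (1 + u)"
proof (cases "u = 0")
  case False
  assume "0 \<le> u"
  with False show ?thesis by (simp add: act_def sigma2_def field_simps)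
qed (simp add: act_def sigma1_def)

lemma act_neg_recip_scaled: "0 < c \<Longrightarrow> c \<le> y \<Longrightarrow> (1 + act (- (y / c - 1))) / c = 1 / y"
  using act_neg_recip[of "y / c - 1"] by (simp add: field_simps)

section \<open>Features that are affine in a hidden layer\<close>

definition affine_readout :: "'i set \<Rightarrow> 'a set \<Rightarrow> ('a \<Rightarrow> 'i \<Rightarrow> real) \<Rightarrow> ('a \<Rightarrow> real) \<Rightarrow> bool" where
  "affine_readout I X h f \<longleftrightarrow> (\<exists>\<alpha> \<beta>. \<forall>x\<in>X. f x = (\<Sum>j\<in>I. \<alpha> j * h x j) + \<beta>)"

lemma affine_readout_const: "affine_readout I X h (\<lambda>x. c)"
  unfolding affine_readout_def by (rule exI[of _ "\<lambda>j. 0"], rule exI[of _ c]) simp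

lemma affine_readout_component:
  assumes "finite I" "k \<in> I"
  shows "affine_readout I X h (\<lambda>x. h x k)"
proof -
  have "(\<Sum>j\<in>I. (if j = k then 1 else 0) * h x j) = h x k" for x
    using assms by (simp add: if_distrib[of "\<lambda>c. c * _"] cong: if_cong)
  then show ?thesis
    unfolding affine_readout_def by (intro exI[of _ "\<lambda>j. if j = k then 1 else 0"] exI[of _ 0]) simp
qed

lemma affine_readout_add:
  assumes "affine_readout I X h f" "affine_readout I X h g"
  shows "affine_readout I X h (\<lambda>x. f x + g x)"
proof -
  obtain \<alpha>1 \<beta>1 \<alpha>2 \<beta>2 where "\<forall>x\<in>X. f x = (\<Sum>j\<in>I. \<alpha>1 j * h x j) + \<beta>1"
    "\<forall>x\<in>X. g x = (\<Sum>j\<in>I. \<alpha>2 j * h x j) + \<beta>2"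
    using assms unfolding affine_readout_def by blast
  then show ?thesis unfolding affine_readout_def
    by (intro exI[of _ "\<lambda>j. \<alpha>1 j + \<alpha>2 j"] exI[of _ "\<beta>1 + \<beta>2"]) (simp add: distrib_right sum.distrib)
qed

lemma affine_readout_scale:
  assumes "affine_readout I X h f"
  shows "affine_readout I X h (\<lambda>x. c * f x)"
proof -
  obtain \<alpha> \<beta> where "\<forall>x\<in>X. f x = (\<Sum>j\<in>I. \<alpha> j * h x j) + \<beta>"
    using assms unfolding affine_readout_def by blast
  then show ?thesis unfolding affine_readout_def
    by (intro exI[of _ "\<lambda>j. c * \<alpha> j"] exI[of _ "c * \<beta>"])
       (simp add: distrib_left sum_distrib_left mult.assoc)
qed

lemma affine_readout_cong:
  "affine_readout I X h f \<Longrightarrow> (\<And>x. x \<in> X \<Longrightarrow> f x = g x) \<Longrightarrow> affine_readout I X h g"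
  unfolding affine_readout_def by auto

lemma affine_readout_scale_right: "affine_readout I X h f \<Longrightarrow> affine_readout I X h (\<lambda>x. f x * c)"
  using affine_readout_scale[of I X h f c] by (simp add: mult.commute)

lemma affine_readout_divide: "affine_readout I X h f \<Longrightarrow> affine_readout I X h (\<lambda>x. f x / c)"
  using affine_readout_scale[of I X h f "1 / c"] by simp

lemma affine_readout_minus: "affine_readout I X h f \<Longrightarrow> affine_readout I X h (\<lambda>x. - f x)"
  using affine_readout_scale[of I X h f "- 1"] by simp

lemma affine_readout_diff:
  "affine_readout I X h f \<Longrightarrow> affine_readout I X h g \<Longrightarrow> affine_readout I X h (\<lambda>x. f x - g x)"
  using affine_readout_add[of I X h f "\<lambda>x. - g x"] affine_readout_minus[of I X h g] by simp

lemma affine_readout_sum: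
  "finite J \<Longrightarrow> (\<And>j. j \<in> J \<Longrightarrow> affine_readout I X h (f j)) \<Longrightarrow>
    affine_readout I X h (\<lambda>x. \<Sum>j\<in>J. f j x)"
  by (induction J rule: finite_induct) (simp_all add: affine_readout_const affine_readout_add)

lemmas affine_readout_intros = affine_readout_const affine_readout_add affine_readout_diff
  affine_readout_scale affine_readout_scale_right affine_readout_divide affine_readout_minus
  affine_readout_sum

definition hidden_layer :: "nat \<Rightarrow> (real^'d::finite \<Rightarrow> nat \<Rightarrow> real) \<Rightarrow> nat \<Rightarrow> bool" where
  "hidden_layer N h l \<longleftrightarrow> (\<exists>W0 c0 W c. h = (\<lambda>x. hidden_out N W0 c0 W c x l))"

definition readable :: "nat \<Rightarrow> (real^'d::finite) set \<Rightarrow> nat \<Rightarrow> (real^'d \<Rightarrow> real) set \<Rightarrow> bool" where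
  "readable N X l F \<longleftrightarrow> (\<exists>h. hidden_layer N h l \<and> (\<forall>f\<in>F. affine_readout {..<N} X h f))"

lemma readable_closure:
  assumes "readable N X l F"
    and "\<And>h. \<forall>f\<in>F. affine_readout {..<N} X h f \<Longrightarrow> \<forall>g\<in>F'. affine_readout {..<N} X h g"
  shows "readable N X l F'"
  using assms unfolding readable_def by blast

lemma finite_set_padded_enumeration:
  assumes "finite G" "card G \<le> N"
  obtains e :: "nat \<Rightarrow> 'a" where "G \<subseteq> e ` {..<N}" "e ` {..<N} \<subseteq> insert z G"
proof -
  obtain f where f: "bij_betw f {..<card G} G"
    using ex_bij_betw_nat_finite[OF assms(1)] by (auto simp: atLeast0LessThan)
  define e where "e k = (if k < card G then f k else z)" for k
  have "G \<subseteq> e ` {..<N}"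
  proof
    fix g assume "g \<in> G"
    then obtain k where "k < card G" "g = f k" using f by (auto simp: bij_betw_def)
    then show "g \<in> e ` {..<N}" using assms(2) unfolding e_def by (intro image_eqI[of _ _ k]) auto
  qed
  moreover have "e ` {..<N} \<subseteq> insert z G" using bij_betw_apply[OF f] by (auto simp: e_def)
  ultimately show thesis by (rule that)
qed

lemma first_layer:
  assumes "finite G" "card G \<le> N" "\<forall>g\<in>G. affine_readout UNIV X (\<lambda>x j. x $ j) g"
  obtains h where "hidden_layer N h 0" "\<forall>g\<in>G. affine_readout {..<N} X h (\<lambda>x. act (g x))"
proof -
  obtain e where e: "G \<subseteq> e ` {..<N}" "e ` {..<N} \<subseteq> insert (\<lambda>x. 0) G"
    by (rule finite_set_padded_enumeration[OF assms(1,2)])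
  have "affine_readout UNIV X (\<lambda>x j. x $ j) (e k)" if "k < N" for k
  proof -
    have "e k \<in> insert (\<lambda>x. 0) G" using e(2) that by blast
    then show ?thesis using assms(3) affine_readout_const by auto
  qed
  then have "\<forall>k. \<exists>w c. k < N \<longrightarrow> (\<forall>x\<in>X. e k x = (\<Sum>j\<in>UNIV. w j * x $ j) + c)"
    unfolding affine_readout_def by blast
  then obtain W c where Wc: "\<And>k. k < N \<Longrightarrow> \<forall>x\<in>X. e k x = (\<Sum>j\<in>UNIV. W k j * x $ j) + c k"
    by metis
  define h where "h = (\<lambda>x. hidden_out N W c (\<lambda>_ _ _. 0) (\<lambda>_ _. 0) x 0)"
  have "affine_readout {..<N} X h (\<lambda>x. act (g x))" if g: "g \<in> G" for g
  proof -
    obtain k where k: "k < N" "g = e k" using e(1) g by blast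
    then have "\<forall>x\<in>X. h x k = act (g x)" using Wc by (simp add: h_def affine_in_def)
    then show ?thesis
      using affine_readout_component[of "{..<N}" k X h] k(1) by (auto intro: affine_readout_cong)
  qed
  moreover have "hidden_layer N h 0" unfolding hidden_layer_def h_def by blast
  ultimately show thesis using that by blast
qed

lemma hidden_out_fun_upd:
  "k \<le> l \<Longrightarrow> hidden_out N W0 c0 (W(Suc l := V)) (c(Suc l := e)) x k = hidden_out N W0 c0 W c x k"
  by (induction k) auto

lemma next_layer:
  assumes "hidden_layer N h l" "finite G" "card G \<le> N" "\<forall>g\<in>G. affine_readout {..<N} X h g"
  obtains h' where "hidden_layer N h' (Suc l)" "\<forall>g\<in>G. affine_readout {..<N} X h' (\<lambda>x. act (g x))"
proof -
  obtain W0 c0 W c where h: "h = (\<lambda>x. hidden_out N W0 c0 W c x l)"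
    using assms(1) unfolding hidden_layer_def by blast
  obtain e where e: "G \<subseteq> e ` {..<N}" "e ` {..<N} \<subseteq> insert (\<lambda>x. 0) G"
    by (rule finite_set_padded_enumeration[OF assms(2,3)])
  have "affine_readout {..<N} X h (e k)" if "k < N" for k
  proof -
    have "e k \<in> insert (\<lambda>x. 0) G" using e(2) that by blast
    then show ?thesis using assms(4) affine_readout_const by auto
  qed
  then have "\<forall>k. \<exists>\<alpha> \<beta>. k < N \<longrightarrow> (\<forall>x\<in>X. e k x = (\<Sum>j<N. \<alpha> j * h x j) + \<beta>)"
    unfolding affine_readout_def by blast
  then obtain \<alpha> \<beta> where ab: "\<And>k. k < N \<Longrightarrow> \<forall>x\<in>X. e k x = (\<Sum>j<N. \<alpha> k j * h x j) + \<beta> k"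
    by metis
  define h' where "h' = (\<lambda>x. hidden_out N W0 c0 (W(Suc l := \<alpha>)) (c(Suc l := \<beta>)) x (Suc l))"
  have "affine_readout {..<N} X h' (\<lambda>x. act (g x))" if g: "g \<in> G" for g
  proof -
    obtain k where k: "k < N" "g = e k" using e(1) g by blast
    then have "\<forall>x\<in>X. h' x k = act (g x)"
      using ab by (simp add: h'_def hidden_out_fun_upd affine_nat_def h)
    then show ?thesis
      using affine_readout_component[of "{..<N}" k X h'] k(1) by (auto intro: affine_readout_cong)
  qed
  moreover have "hidden_layer N h' (Suc l)" unfolding hidden_layer_def h'_def by blast
  ultimately show thesis using that by blast
qed

lemma readable_Suc_carry:
  assumes "readable N X l F" "finite F" "card F \<le> N" "\<forall>f\<in>F. \<forall>x\<in>X. 0 \<le> f x \<and> f x \<le> 1"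
  shows "readable N X (Suc l) F"
proof -
  obtain h where h: "hidden_layer N h l" "\<forall>f\<in>F. affine_readout {..<N} X h f"
    using assms(1) unfolding readable_def by blast
  obtain h' where h': "hidden_layer N h' (Suc l)" "\<forall>f\<in>F. affine_readout {..<N} X h' (\<lambda>x. act (f x))"
    using next_layer[OF h(1) assms(2,3) h(2)] by blast
  have "affine_readout {..<N} X h' f" if f: "f \<in> F" for f
  proof (rule affine_readout_cong)
    show "affine_readout {..<N} X h' (\<lambda>x. act (f x))" using h'(2) f by blast
    show "act (f x) = f x" if "x \<in> X" for x
      using assms(4) f that by (intro act_unit) auto
  qed
  then show ?thesis using h'(1) unfolding readable_def by blast
qed

lemma readable_carry:
  assumes "readable N X l F" "finite F" "card F \<le> N" "\<forall>f\<in>F. \<forall>x\<in>X. 0 \<le> f x \<and> f x \<le> 1"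
    and "l \<le> l'"
  shows "readable N X l' F"
  using assms(5,1) by (induction rule: dec_induct) (use assms(2-4) readable_Suc_carry in blast)+

lemma readable_output:
  assumes "readable N X (L - 1) {f}"
  shows "\<exists>\<psi>\<in>H N L. \<forall>x\<in>X. \<psi> x = f x"
proof -
  obtain W0 c0 W c where "affine_readout {..<N} X (\<lambda>x. hidden_out N W0 c0 W c x (L - 1)) f"
    using assms unfolding readable_def hidden_layer_def by blast
  then obtain \<alpha> \<beta> where f: "\<forall>x\<in>X. f x = (\<Sum>j<N. \<alpha> j * hidden_out N W0 c0 W c x (L - 1) j) + \<beta>"
    unfolding affine_readout_def by blast
  define \<psi> where "\<psi> = (\<lambda>x. (\<Sum>j<N. \<alpha> j * hidden_out N W0 c0 W c x (L - 1) j) + \<beta>)"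
  have "\<psi> \<in> H N L" unfolding H_def \<psi>_def by (intro CollectI exI) (rule refl)
  moreover have "\<forall>x\<in>X. \<psi> x = f x" using f by (simp add: \<psi>_def)
  ultimately show ?thesis by blast
qed

lemma H_affine_image:
  assumes "\<psi> \<in> H N L"
  shows "(\<lambda>x. c * \<psi> x + d) \<in> H N L"
proof -
  obtain W0 c0 W cs w \<beta> where \<psi>: "\<psi> = (\<lambda>x. (\<Sum>j<N. w j * hidden_out N W0 c0 W cs x (L - 1) j) + \<beta>)"
    using assms unfolding H_def by blast
  define w' where "w' j = c * w j" for j
  have eq: "(\<lambda>x. c * \<psi> x + d) =
      (\<lambda>x. (\<Sum>j<N. w' j * hidden_out N W0 c0 W cs x (L - 1) j) + (c * \<beta> + d))"
    unfolding \<psi> w'_def by (simp add: sum_distrib_left algebra_simps)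
  show ?thesis unfolding H_def by (intro CollectI exI) (rule eq)
qed

lemma card_UN_set_le:
  assumes "finite K" "\<And>k. k \<in> K \<Longrightarrow> length (gs k) \<le> s"
  shows "card (\<Union>k\<in>K. set (gs k)) \<le> s * card K"
proof -
  have "card (\<Union>k\<in>K. set (gs k)) \<le> (\<Sum>k\<in>K. card (set (gs k)))"
    using card_UN_le[OF assms(1)] .
  also have "\<dots> \<le> (\<Sum>k\<in>K. s)" using assms(2) card_length order_trans by (intro sum_mono) blast
  finally show ?thesis by (simp add: mult.commute)
qed

lemma affine_readout_act_scaled:
  assumes "affine_readout I X h (\<lambda>x. act (g x / B))" "\<forall>x\<in>X. 0 \<le> g x \<and> g x \<le> B"
  shows "affine_readout I X h g"
proof (rule affine_readout_cong)
  show "affine_readout I X h (\<lambda>x. B * act (g x / B))" by (rule affine_readout_scale[OF assms(1)])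
  show "B * act (g x / B) = g x" if "x \<in> X" for x
    using assms(2) that by (cases "B = 0") (auto simp: act_unit)
qed

lemma affine_readout_act_nonneg:
  assumes "affine_readout I X h (\<lambda>x. act (g x))" "\<forall>x\<in>X. 0 \<le> g x"
  shows "affine_readout I X h (\<lambda>x. sigma1 (g x))"
  using assms(1) by (rule affine_readout_cong) (use assms(2) in \<open>simp add: act_nonneg\<close>)

lemma affine_readout_act_unit:
  assumes "affine_readout I X h (\<lambda>x. act (g x))" "\<forall>x\<in>X. 0 \<le> g x \<and> g x \<le> 1"
  shows "affine_readout I X h g"
  using affine_readout_act_scaled[of I X h g 1] assms by simp

lemma first_layer_lists:
  assumes K: "finite K" "\<And>k. k \<in> K \<Longrightarrow> length (gs k) \<le> s" and width: "s * card K \<le> N"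
    and pre: "\<And>k g. k \<in> K \<Longrightarrow> g \<in> set (gs k) \<Longrightarrow> affine_readout UNIV X (\<lambda>x j. x $ j) g"
  obtains h where "hidden_layer N h 0"
    "\<And>k g. k \<in> K \<Longrightarrow> g \<in> set (gs k) \<Longrightarrow> affine_readout {..<N} X h (\<lambda>x. act (g x))"
proof -
  have "card (\<Union>k\<in>K. set (gs k)) \<le> N" using card_UN_set_le[of K gs s, OF K] width by linarith
  moreover have "finite (\<Union>k\<in>K. set (gs k))" using K(1) by simp
  ultimately obtain h where "hidden_layer N h 0"
      "\<forall>g\<in>(\<Union>k\<in>K. set (gs k)). affine_readout {..<N} X h (\<lambda>x. act (g x))"
    using first_layer pre by blast
  then show thesis by (intro that) auto
qed

lemma next_layer_lists:
  assumes h: "hidden_layer N h l" and K: "finite K" "\<And>k. k \<in> K \<Longrightarrow> length (gs k) \<le> s"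
    and C: "finite C" and width: "s * card K + card C \<le> N"
    and pre: "\<And>k g. k \<in> K \<Longrightarrow> g \<in> set (gs k) \<Longrightarrow> affine_readout {..<N} X h g"
    and preC: "\<And>c. c \<in> C \<Longrightarrow> affine_readout {..<N} X h c"
  obtains h' where "hidden_layer N h' (Suc l)"
    "\<And>k g. k \<in> K \<Longrightarrow> g \<in> set (gs k) \<Longrightarrow> affine_readout {..<N} X h' (\<lambda>x. act (g x))"
    "\<And>c. c \<in> C \<Longrightarrow> affine_readout {..<N} X h' (\<lambda>x. act (c x))"
proof -
  define G where "G = (\<Union>k\<in>K. set (gs k)) \<union> C"
  have "card G \<le> N"
    using card_Un_le[of "\<Union>k\<in>K. set (gs k)" C] card_UN_set_le[of K gs s, OF K] width
    unfolding G_def by linarith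
  moreover have "finite G" "\<forall>g\<in>G. affine_readout {..<N} X h g"
    using K(1) C pre preC unfolding G_def by auto
  ultimately obtain h' where "hidden_layer N h' (Suc l)"
      "\<forall>g\<in>G. affine_readout {..<N} X h' (\<lambda>x. act (g x))"
    using next_layer[OF h] by blast
  then show thesis by (intro that) (auto simp: G_def)
qed

section \<open>Squares and products\<close>

definition recip_gap :: "real \<Rightarrow> real" where
  "recip_gap y = (1 + act (- (y / 2 - 1))) / 2 - (1 + act (- ((y + 1) / 3 - 1))) / 3"

lemma recip_gap_eq:
  assumes "2 \<le> y"
  shows "recip_gap y = 1 / (y * (y + 1))"
proof -
  have "(1 + act (- (y / 2 - 1))) / 2 = 1 / y" "(1 + act (- ((y + 1) / 3 - 1))) / 3 = 1 / (y + 1)"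
    using assms by (intro act_neg_recip_scaled; simp)+
  then have "recip_gap y = 1 / y - 1 / (y + 1)" unfolding recip_gap_def by (simp only:)
  then show ?thesis using assms by (simp add: field_simps)
qed

lemma square_via_recip_gap:
  assumes "2 \<le> y" "y \<le> B"
  shows "(1 + act (- (recip_gap y * (B * (B + 1)) - 1))) * (B * (B + 1)) - y = y\<^sup>2"
proof -
  define c where "c = B * (B + 1)"
  have y: "0 < y * (y + 1)" and c: "0 < c" using assms unfolding c_def by simp_all
  have "y * (y + 1) \<le> c" unfolding c_def using assms by (intro mult_mono) auto
  then have le: "1 \<le> recip_gap y * c" using y by (simp add: recip_gap_eq[OF assms(1)] field_simps)
  have "(1 + act (- (recip_gap y * c - 1))) * c = 1 / (recip_gap y * c) * c"
    using act_neg_recip[of "recip_gap y * c - 1"] le by simp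
  also have "\<dots> = y * (y + 1)" using c by (simp add: recip_gap_eq[OF assms(1)])
  finally show ?thesis unfolding c_def by (simp add: power2_eq_square algebra_simps)
qed

lemma readable_squares:
  fixes P C :: "(real^'d::finite \<Rightarrow> real) set"
  assumes F: "readable N X l (P \<union> C)" and fin: "finite P" "finite C"
    and width: "3 * card P + card C \<le> N"
    and P: "\<forall>p\<in>P. \<forall>x\<in>X. 2 \<le> p x \<and> p x \<le> B" and C: "\<forall>c\<in>C. \<forall>x\<in>X. 0 \<le> c x \<and> c x \<le> 1"
  shows "readable N X (l + 2) ((\<lambda>p x. (p x)\<^sup>2) ` P \<union> C)"
proof -
  let ?rd = "affine_readout {..<N} X"
  have carry: "?rd h p" if "?rd h (\<lambda>x. act (p x / B))" "p \<in> P" for h p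
    using that(1) by (rule affine_readout_act_scaled) (use P that(2) in force)
  have carry_C: "?rd h c" if "?rd h (\<lambda>x. act (c x))" "c \<in> C" for h c
    using that(1) by (rule affine_readout_act_unit) (use C that(2) in force)
  obtain h0 where h0: "hidden_layer N h0 l" "\<And>f. f \<in> P \<union> C \<Longrightarrow> ?rd h0 f"
    using F unfolding readable_def by blast
  define pre1 where
    "pre1 (p :: real^'d \<Rightarrow> real) = [\<lambda>x. - (p x / 2 - 1), \<lambda>x. - ((p x + 1) / 3 - 1), \<lambda>x. p x / B]"
    for p
  obtain h1 where h1: "hidden_layer N h1 (Suc l)"
      "\<And>p g. p \<in> P \<Longrightarrow> g \<in> set (pre1 p) \<Longrightarrow> ?rd h1 (\<lambda>x. act (g x))"
      "\<And>c. c \<in> C \<Longrightarrow> ?rd h1 (\<lambda>x. act (c x))"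
    by (rule next_layer_lists[OF h0(1) fin(1) _ fin(2) width, of pre1])
      (auto simp: pre1_def intro!: affine_readout_intros h0(2))
  have gap: "?rd h1 (\<lambda>x. recip_gap (p x))" if "p \<in> P" for p
    unfolding recip_gap_def by (intro affine_readout_intros h1(2)[OF that]) (simp_all add: pre1_def)
  have PC1: "?rd h1 f" if "f \<in> P \<union> C" for f
    using that carry[OF h1(2)] carry_C[OF h1(3)] by (auto simp: pre1_def)
  define pre2 where
    "pre2 (p :: real^'d \<Rightarrow> real) = [\<lambda>x. - (recip_gap (p x) * (B * (B + 1)) - 1), \<lambda>x. p x / B]"
    for p
  obtain h2 where h2: "hidden_layer N h2 (Suc (Suc l))"
      "\<And>p g. p \<in> P \<Longrightarrow> g \<in> set (pre2 p) \<Longrightarrow> ?rd h2 (\<lambda>x. act (g x))"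
      "\<And>c. c \<in> C \<Longrightarrow> ?rd h2 (\<lambda>x. act (c x))"
    by (rule next_layer_lists[OF h1(1) fin(1) _ fin(2), of pre2 2])
      (use width in \<open>auto simp: pre2_def intro!: affine_readout_intros gap PC1\<close>)
  have P2: "?rd h2 p" if "p \<in> P" for p by (rule carry[OF h2(2)[OF that] that]) (simp add: pre2_def)
  have C2: "?rd h2 c" if "c \<in> C" for c by (rule carry_C[OF h2(3)[OF that] that])
  have "?rd h2 (\<lambda>x. (p x)\<^sup>2)" if p: "p \<in> P" for p
  proof (rule affine_readout_cong)
    show "?rd h2 (\<lambda>x. (1 + act (- (recip_gap (p x) * (B * (B + 1)) - 1))) * (B * (B + 1)) - p x)"
      by (intro affine_readout_intros h2(2)[OF p] P2[OF p]) (simp add: pre2_def)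
    show "(1 + act (- (recip_gap (p x) * (B * (B + 1)) - 1))) * (B * (B + 1)) - p x = (p x)\<^sup>2"
      if "x \<in> X" for x using P p that by (intro square_via_recip_gap) auto
  qed
  then show ?thesis unfolding readable_def add_2_eq_Suc' using h2(1) C2 by blast
qed

lemma readable_products:
  fixes u v :: "'j \<Rightarrow> real^'d::finite \<Rightarrow> real"
  assumes F: "readable N X l (u ` J \<union> v ` J \<union> C)" and fin: "finite J" "finite C"
    and width: "7 * card J + card C \<le> N"
    and uv: "\<forall>j\<in>J. \<forall>x\<in>X. 0 \<le> u j x \<and> u j x \<le> 1 \<and> 0 \<le> v j x \<and> v j x \<le> 1"
    and C: "\<forall>c\<in>C. \<forall>x\<in>X. 0 \<le> c x \<and> c x \<le> 1"
  shows "readable N X (l + 2) ((\<lambda>j x. u j x * v j x) ` J \<union> C)"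
proof -
  \<comment> \<open>the shift by \<open>3\<close> puts both bases of the polarization identity into \<open>[2, 5]\<close>\<close>
  define P where "P = (\<Union>j\<in>J. set [\<lambda>x. u j x + v j x + 3, \<lambda>x. u j x - v j x + 3])"
  have "card P \<le> 2 * card J" unfolding P_def by (rule card_UN_set_le[OF fin(1)]) simp
  moreover have "card (v ` J \<union> C) \<le> card J + card C"
    using card_Un_le[of "v ` J" C] card_image_le[OF fin(1), of v] by linarith
  moreover have "readable N X l (P \<union> (v ` J \<union> C))"
    using F by (rule readable_closure) (auto simp: P_def intro!: affine_readout_intros)
  ultimately have "readable N X (l + 2) ((\<lambda>p x. (p x)\<^sup>2) ` P \<union> (v ` J \<union> C))"
    using fin width C
    by (intro readable_squares[where B=5]) (auto simp: P_def dest: uv[rule_format])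
  then show ?thesis
  proof (rule readable_closure)
    fix h assume sq: "\<forall>f\<in>(\<lambda>p x. (p x)\<^sup>2) ` P \<union> (v ` J \<union> C). affine_readout {..<N} X h f"
    have "affine_readout {..<N} X h (\<lambda>x. u j x * v j x)" if j: "j \<in> J" for j
    proof -
      have "(\<lambda>x. (u j x + v j x + 3)\<^sup>2) \<in> (\<lambda>p x. (p x)\<^sup>2) ` P"
        "(\<lambda>x. (u j x - v j x + 3)\<^sup>2) \<in> (\<lambda>p x. (p x)\<^sup>2) ` P"
        unfolding P_def using j by auto
      then have "affine_readout {..<N} X h
          (\<lambda>x. ((u j x + v j x + 3)\<^sup>2 - (u j x - v j x + 3)\<^sup>2) / 4 - 3 * v j x)"
        using sq j by (intro affine_readout_intros) auto
      moreover have
        "((u j x + v j x + 3)\<^sup>2 - (u j x - v j x + 3)\<^sup>2) / 4 - 3 * v j x = u j x * v j x" for x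
        by (simp add: power2_eq_square algebra_simps)
      ultimately show ?thesis by simp
    qed
    then show "\<forall>g\<in>(\<lambda>j x. u j x * v j x) ` J \<union> C. affine_readout {..<N} X h g" using sq by auto
  qed
qed

section \<open>Memorising a table with one neuron\<close>

definition recip_seq :: "real \<Rightarrow> nat \<Rightarrow> real" where
  "recip_seq b i = 1 / (1 + b * real (i + 1))"

definition recip_poly :: "nat \<Rightarrow> (nat \<Rightarrow> int) \<Rightarrow> real poly" where
  "recip_poly M q = (\<Sum>i<M. smult (of_int (q i)) (\<Prod>l\<in>{..<M}-{i}. [:1, real (l+1):]))"

lemma poly_recip_poly:
  "poly (recip_poly M q) b = (\<Sum>i<M. of_int (q i) * (\<Prod>l\<in>{..<M}-{i}. 1 + b * real (l+1)))"
  unfolding recip_poly_def by (simp add: poly_sum poly_prod algebra_simps)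

lemma recip_poly_nonzero:
  assumes "i0 < M" "q i0 \<noteq> 0"
  shows "recip_poly M q \<noteq> 0"
proof -
  define b0 where "b0 = - 1 / real (i0 + 1)"
  have z: "1 + b0 * real (i0 + 1) = 0" unfolding b0_def by simp
  have "(\<Sum>i<M. of_int (q i) * (\<Prod>l\<in>{..<M}-{i}. 1 + b0 * real (l+1)))
      = (\<Sum>i\<in>{i0}. of_int (q i) * (\<Prod>l\<in>{..<M}-{i}. 1 + b0 * real (l+1)))"
  proof (rule sum.mono_neutral_right)
    show "\<forall>i\<in>{..<M} - {i0}. of_int (q i) * (\<Prod>l\<in>{..<M} - {i}. 1 + b0 * real (l + 1)) = 0"
    proof
      fix i assume i: "i \<in> {..<M} - {i0}"
      have "(\<Prod>l\<in>{..<M} - {i}. 1 + b0 * real (l + 1)) = 0"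
        using z i assms(1) by (intro prod_zero) auto
      then show "of_int (q i) * (\<Prod>l\<in>{..<M} - {i}. 1 + b0 * real (l + 1)) = 0" by simp
    qed
  qed (use assms in auto)
  also have "\<dots> = of_int (q i0) * (\<Prod>l\<in>{..<M}-{i0}. 1 + b0 * real (l+1))" by simp
  also have "\<dots> \<noteq> 0"
  proof -
    have "(\<Prod>l\<in>{..<M}-{i0}. 1 + b0 * real (l+1)) \<noteq> 0"
    proof -
      have "1 + b0 * real (l+1) \<noteq> 0" if l: "l \<in> {..<M}-{i0}" for l
      proof
        assume "1 + b0 * real (l+1) = 0"
        then have "real (i0 + 1) = real (l + 1)" unfolding b0_def by (simp add: field_simps)
        then show False using l by simp
      qed
      then show ?thesis by simp
    qed
    then show ?thesis using assms by simp
  qed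
  finally show ?thesis by (metis poly_recip_poly poly_0)
qed

lemma recip_seq_sum_eq_poly:
  assumes "b > 0"
  shows "(\<Prod>l<M. 1 + b * real (l+1)) * (\<Sum>i<M. of_int (q i) * recip_seq b i) =
    poly (recip_poly M q) b"
proof -
  have "(\<Prod>l<M. 1 + b * real (l+1)) * (of_int (q i) * recip_seq b i) =
        of_int (q i) * (\<Prod>l\<in>{..<M}-{i}. 1 + b * real (l+1))" if "i < M" for i
  proof -
    have "(\<Prod>l<M. 1 + b * real (l+1)) = (1 + b * real (i+1)) * (\<Prod>l\<in>{..<M}-{i}. 1 + b * real (l+1))"
      using that by (subst prod.remove[of _ i]) auto
    moreover have "1 + b * real (i+1) > 0" using assms by (simp add: add_pos_nonneg)
    ultimately show ?thesis unfolding recip_seq_def by (simp add: field_simps)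
  qed
  then show ?thesis unfolding poly_recip_poly sum_distrib_left by (intro sum.cong) auto
qed

lemma recip_seq_int_independent:
  "\<exists>b>0. \<forall>q::nat \<Rightarrow> int. (\<Sum>i<M. of_int (q i) * recip_seq b i) = 0 \<longrightarrow> (\<forall>i<M. q i = 0)"
proof -
  \<comment> \<open>integer coefficient vectors, encoded by lists so that there are countably many\<close>
  define qq :: "int list \<Rightarrow> nat \<Rightarrow> int" where "qq l i = (if i < length l then l ! i else 0)" for l i
  define Z where "Z l = {b. poly (recip_poly M (qq l)) b = 0}" for l
  define I where "I = {l. \<exists>i<M. qq l i \<noteq> 0}"
  have fin: "finite (Z l)" if lI: "l \<in> I" for l
  proof -
    obtain i0 where "i0 < M" "qq l i0 \<noteq> 0" using lI unfolding I_def by blast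
    then show ?thesis unfolding Z_def by (intro poly_roots_finite recip_poly_nonzero)
  qed
  have cnt: "countable (\<Union>l\<in>I. Z l)"
    by (intro countable_UN) (auto intro: countable_finite fin)
  have "uncountable ({0<..<1::real} - (\<Union>l\<in>I. Z l))"
    by (intro uncountable_minus_countable cnt) (simp add: uncountable_open_interval)
  then have "{0<..<1::real} - (\<Union>l\<in>I. Z l) \<noteq> {}" by (metis countable_empty)
  then obtain b where b: "b \<in> {0<..<1::real}" "b \<notin> (\<Union>l\<in>I. Z l)"
    by blast
  have "\<forall>q::nat \<Rightarrow> int. (\<Sum>i<M. of_int (q i) * recip_seq b i) = 0 \<longrightarrow> (\<forall>i<M. q i = 0)"
  proof (rule allI, rule impI)
    fix q :: "nat \<Rightarrow> int"
    assume s: "(\<Sum>i<M. of_int (q i) * recip_seq b i) = 0"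
    define l where "l = map q [0..<M]"
    have ql: "qq l i = q i" if "i < M" for i using that unfolding qq_def l_def by simp
    have "(\<Sum>i<M. of_int (qq l i) * recip_seq b i) = 0" using s ql by simp
    then have "poly (recip_poly M (qq l)) b = 0"
      using recip_seq_sum_eq_poly[of b M "qq l"] b(1) by simp
    then have "l \<notin> I" using b(2) unfolding Z_def by blast
    then show "\<forall>i<M. q i = 0" using ql unfolding I_def by auto
  qed
  then show ?thesis using b(1) by auto
qed

lemma recip_seq_independent:
  assumes b: "b > 0"
    and good: "\<forall>q::nat \<Rightarrow> int. (\<Sum>i<M. of_int (q i) * recip_seq b i) = 0 \<longrightarrow> (\<forall>i<M. q i = 0)"
  shows "module.independent (\<lambda>r. (*) (real_of_int r)) (recip_seq b ` {..<M})"
    and "inj_on (recip_seq b) {..<M}"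
proof -
  show inj: "inj_on (recip_seq b) {..<M}"
  proof (rule inj_onI)
    fix i j assume "i \<in> {..<M}" "j \<in> {..<M}" "recip_seq b i = recip_seq b j"
    then have "1 + b * real (i+1) = 1 + b * real (j+1)"
      unfolding recip_seq_def using b by (simp add: add_pos_nonneg)
    then show "i = j" using b by simp
  qed
  interpret Modules.module "(\<lambda>r. (*) (real_of_int r))"
    by (simp add: Modules.module.intro distrib_left mult.commute)
  show "independent (recip_seq b ` {..<M})"
    unfolding dependent_explicit
  proof (clarify)
    fix t u v
    assume t: "finite t" "t \<subseteq> recip_seq b ` {..<M}" "(\<Sum>v\<in>t. real_of_int (u v) * v) = 0"
      and v: "v \<in> t" "u v \<noteq> 0"
    define I where "I = {i. i < M \<and> recip_seq b i \<in> t}"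
    have tI: "t = recip_seq b ` I" using t(2) unfolding I_def by auto
    have injI: "inj_on (recip_seq b) I" using inj unfolding I_def by (rule inj_on_subset) auto
    define q where "q i = (if i \<in> I then u (recip_seq b i) else 0)" for i
    have "(\<Sum>i<M. of_int (q i) * recip_seq b i) = (\<Sum>i\<in>I. of_int (u (recip_seq b i)) * recip_seq b i)"
      unfolding q_def by (rule sum.mono_neutral_cong_right) (auto simp: I_def)
    also have "\<dots> = (\<Sum>v\<in>t. real_of_int (u v) * v)"
      unfolding tI by (rule sum.reindex[OF injI, symmetric, unfolded comp_def])
    also have "\<dots> = 0" by (rule t(3))
    finally have "\<forall>i<M. q i = 0" using good by blast
    moreover obtain i where "i \<in> I" "v = recip_seq b i" using v(1) tI by blast
    ultimately show False using v(2) unfolding q_def I_def by auto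
  qed
qed

lemma act_approximates_table:
  fixes \<alpha> :: "nat \<Rightarrow> real"
  assumes al: "\<forall>K. 0 \<le> \<alpha> K \<and> \<alpha> K \<le> 1" and dl: "0 < \<delta>"
  shows "\<exists>b t C. 0 < b \<and> 2 * \<bar>t\<bar> \<le> C \<and>
     (\<forall>K\<in>{1..M}. \<bar>act (2 * t * (1 + act (- (b * real K))) + C) - \<alpha> K\<bar> < \<delta>)"
proof -
  obtain b where b: "0 < b"
      "\<forall>q::nat \<Rightarrow> int. (\<Sum>i<M. of_int (q i) * recip_seq b i) = 0 \<longrightarrow> (\<forall>i<M. q i = 0)"
    using recip_seq_int_independent by blast
  note ind = recip_seq_independent[OF b]
  obtain t h where th: "\<And>i. i < M \<Longrightarrow> \<bar>t * recip_seq b i - of_int (h i) - \<alpha> (i + 1) / 2\<bar> < \<delta> / 2"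
    using Kronecker_thm_1[OF ind(1) ind(2), of "\<delta> / 2" "\<lambda>i. \<alpha> (i + 1) / 2"] dl by auto
  define C where "C = 2 * real_of_int \<lceil>\<bar>t\<bar>\<rceil>"
  have C: "2 * \<bar>t\<bar> \<le> C" unfolding C_def by linarith
  have "\<bar>act (2 * t * (1 + act (- (b * real K))) + C) - \<alpha> K\<bar> < \<delta>" if K: "K \<in> {1..M}" for K
  proof -
    define i where "i = K - 1"
    have i: "i < M" "K = i + 1" using K unfolding i_def by auto
    have "1 + act (- (b * real K)) = 1 / (1 + b * real K)"
      using b(1) by (intro act_neg_recip) simp
    also have "\<dots> = recip_seq b i" unfolding recip_seq_def i(2) by simp
    finally have th1: "1 + act (- (b * real K)) = recip_seq b i" .
    have thpos: "0 < recip_seq b i" "recip_seq b i \<le> 1" unfolding recip_seq_def using b(1)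
      by (auto simp: add_pos_nonneg)
    define e where "e = t * recip_seq b i - of_int (h i) - \<alpha> K / 2"
    have e: "\<bar>e\<bar> < \<delta> / 2" using th[OF i(1)] unfolding e_def i(2) by simp
    have "\<bar>t * recip_seq b i\<bar> \<le> \<bar>t\<bar>" using thpos by (simp add: abs_mult mult_left_le)
    then have arg: "0 \<le> 2 * t * recip_seq b i + C" using C by linarith
    have eq: "2 * t * recip_seq b i + C = (\<alpha> K + 2 * e) + 2 * of_int (h i + \<lceil>\<bar>t\<bar>\<rceil>)"
      unfolding e_def C_def by (simp add: algebra_simps)
    have "act (2 * t * (1 + act (- (b * real K))) + C) = sigma1 (\<alpha> K + 2 * e)"
      unfolding th1 using arg by (simp only: act_nonneg eq sigma1_periodic)
    moreover have "sigma1 (\<alpha> K) = \<alpha> K" using al by (simp add: sigma1_eq_abs)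
    moreover have "\<bar>sigma1 (\<alpha> K + 2 * e) - sigma1 (\<alpha> K)\<bar> \<le> \<bar>2 * e\<bar>"
      using sigma1_lipschitz[of "\<alpha> K + 2 * e" "\<alpha> K"] by simp
    ultimately show ?thesis using e by simp
  qed
  then show ?thesis using b(1) C by blast
qed

lemma act_approximates_tables:
  fixes \<alpha> :: "nat \<Rightarrow> nat \<Rightarrow> real"
  assumes "\<And>j K. 0 \<le> \<alpha> j K \<and> \<alpha> j K \<le> 1" "0 < \<delta>"
  obtains rate freq offset :: "nat \<Rightarrow> real"
  where "\<And>j. 0 < rate j" "\<And>j. 2 * \<bar>freq j\<bar> \<le> offset j"
    "\<And>j K. K \<in> {1..M} \<Longrightarrow>
      \<bar>act (2 * freq j * (1 + act (- (rate j * real K))) + offset j) - \<alpha> j K\<bar> < \<delta>"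
proof -
  have "\<forall>j. \<exists>b t C. 0 < b \<and> 2 * \<bar>t\<bar> \<le> C \<and>
      (\<forall>K\<in>{1..M}. \<bar>act (2 * t * (1 + act (- (b * real K))) + C) - \<alpha> j K\<bar> < \<delta>)"
    using act_approximates_table assms by metis
  then show thesis using that by metis
qed

section \<open>Integer parts from triangular waves\<close>

definition unit_clip :: "real \<Rightarrow> real" where
  "unit_clip z = (\<bar>z\<bar> - \<bar>z - 1\<bar> + 1) / 2"

lemma unit_clip_bounds: "0 \<le> unit_clip z" "unit_clip z \<le> 1"
  unfolding unit_clip_def by (auto simp: abs_if)

lemma unit_clip_eq_0: "z \<le> 0 \<Longrightarrow> unit_clip z = 0"
  unfolding unit_clip_def by (auto simp: abs_if)

lemma unit_clip_eq_1: "1 \<le> z \<Longrightarrow> unit_clip z = 1"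
  unfolding unit_clip_def by (auto simp: abs_if)

lemma unit_clip_less_1D: "unit_clip z < 1 \<Longrightarrow> z < 1"
  unfolding unit_clip_def by (auto simp: abs_if split: if_splits)

lemma unit_clip_pos_D: "0 < unit_clip z \<Longrightarrow> 0 < z"
  unfolding unit_clip_def by (auto simp: abs_if split: if_splits)

lemma unit_clip_act:
  assumes "\<bar>z\<bar> \<le> B" "\<bar>z - 1\<bar> \<le> B" "0 < B"
  shows "unit_clip z = (B * act (z / B + 2) - B * act ((z - 1) / B + 2) + 1) / 2"
  unfolding unit_clip_def using act_abs[OF assms(1,3)] act_abs[OF assms(2,3)] by simp

text \<open>Away from the integers, \<open>\<lfloor>s\<rfloor>\<close> is recovered from the triangular waves \<open>sigma1 s\<close> (which
  gives \<open>frac s\<close> up to a reflection) and \<open>sigma1 (s + 3/2)\<close> (which, clipped, gives the parity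
  of \<open>\<lfloor>s\<rfloor>\<close>).\<close>

lemma floor_from_waves:
  assumes r: "0 < r" and far: "unit_clip (2 - sigma1 (2 * s) / (2 * r)) < 1"
  shows "s - \<bar>sigma1 s - unit_clip (1/2 + (sigma1 (s + 3/2) - 1/2) / (2 * r))\<bar> = of_int \<lfloor>s\<rfloor>"
proof -
  define f where "f = frac s"
  have f01: "0 \<le> f" "f < 1" unfolding f_def by (auto simp: frac_lt_1)
  have sfl: "s = of_int \<lfloor>s\<rfloor> + f" unfolding f_def frac_def by simp
  have "2 - sigma1 (2 * s) / (2 * r) < 1" using unit_clip_less_1D[OF far] .
  then have "2 * r < sigma1 (2 * s)" using r by (simp add: field_simps)
  then have fr: "\<bar>f - 1/2\<bar> < 1/2 - r" unfolding sigma1_double f_def[symmetric]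
    by (auto simp: abs_if)
  show ?thesis
  proof (cases "even \<lfloor>s\<rfloor>")
    case True
    then have "1/2 + (sigma1 (s + 3/2) - 1/2) / (2 * r) \<le> 0"
      using fr r unfolding sigma1_shift f_def[symmetric] by (simp add: field_simps)
    moreover have "sigma1 s = f" using True unfolding sigma1_eq_frac f_def by simp
    ultimately show ?thesis using f01 sfl by (simp add: unit_clip_eq_0)
  next
    case False
    then have "1 \<le> 1/2 + (sigma1 (s + 3/2) - 1/2) / (2 * r)"
      using fr r unfolding sigma1_shift f_def[symmetric] by (simp add: field_simps)
    moreover have "sigma1 s = 1 - f" using False unfolding sigma1_eq_frac f_def by simp
    ultimately show ?thesis using f01 sfl by (simp add: unit_clip_eq_1)
  qed
qed

lemma near_integer_if_clip_pos:
  assumes r: "0 < r" and near: "0 < unit_clip (2 - sigma1 (2 * s) / (2 * r))"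
  shows "\<exists>z::int. \<bar>s - of_int z\<bar> < 2 * r"
proof -
  define f where "f = frac s"
  have f01: "0 \<le> f" "f < 1" unfolding f_def by (auto simp: frac_lt_1)
  have sfl: "s = of_int \<lfloor>s\<rfloor> + f" unfolding f_def frac_def by simp
  have "0 < 2 - sigma1 (2 * s) / (2 * r)" using unit_clip_pos_D[OF near] .
  then have "min f (1 - f) < 2 * r" using r unfolding sigma1_double f_def[symmetric]
    by (simp add: field_simps)
  then consider "f < 2 * r" | "1 - f < 2 * r" by linarith
  then show ?thesis
  proof cases
    case 1
    then show ?thesis using sfl f01 by (intro exI[of _ "\<lfloor>s\<rfloor>"]) simp
  next
    case 2
    then show ?thesis using sfl f01 by (intro exI[of _ "\<lfloor>s\<rfloor> + 1"]) simp
  qed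
qed

lemma shifted_points_not_both_near_integers:
  fixes m j1 j2 :: nat
  assumes "j1 < j2" "j2 < m"
    and "\<bar>s1 - of_int z1\<bar> < 1 / (4 * real m)" "\<bar>s2 - of_int z2\<bar> < 1 / (4 * real m)"
    and "s1 - s2 = (real j2 - real j1) / m"
  shows False
proof -
  have m: "real m > 0" using assms by simp
  define w where "w = int j2 - int j1 - int m * (z1 - z2)"
  have "real m * ((s1 - of_int z1) - (s2 - of_int z2)) = of_int w"
    using assms(5) m unfolding w_def by (simp add: field_simps)
  then have "\<bar>of_int w\<bar> = real m * \<bar>(s1 - of_int z1) - (s2 - of_int z2)\<bar>"
    using m by (metis abs_mult abs_of_pos)
  also have "\<dots> < real m * (1 / (2 * real m))"
    using assms(3,4) m by (intro mult_strict_left_mono) auto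
  also have "\<dots> = 1/2" using m by simp
  finally have "w = 0" by linarith
  then have eq: "int j2 - int j1 = int m * (z1 - z2)" unfolding w_def by simp
  have lt: "0 < int j2 - int j1" "int j2 - int j1 < int m" using assms by auto
  show False
  proof (cases "1 \<le> z1 - z2")
    case True
    then have "int m * 1 \<le> int m * (z1 - z2)" by (intro mult_left_mono) auto
    then show False using eq lt by linarith
  next
    case False
    then have "int m * (z1 - z2) \<le> 0" by (simp add: mult_nonneg_nonpos)
    then show False using eq lt by simp
  qed
qed

lemma base_expansion_inj:
  fixes B :: nat and a c :: "nat \<Rightarrow> nat"
  assumes "\<forall>i<D. a i < B" "\<forall>i<D. c i < B" "(\<Sum>i<D. a i * B ^ i) = (\<Sum>i<D. c i * B ^ i)"
  shows "\<forall>i<D. a i = c i"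
  using assms
proof (induction D arbitrary: a c)
  case (Suc D)
  have split: "(\<Sum>i<Suc D. a i * B ^ i) = a 0 + B * (\<Sum>i<D. a (Suc i) * B ^ i)" for a :: "nat \<Rightarrow> nat"
    unfolding sum.lessThan_Suc_shift by (simp add: sum_distrib_left mult.left_commute)
  have low: "a 0 < B" "c 0 < B" using Suc.prems(1,2) by blast+
  have eq: "a 0 + B * (\<Sum>i<D. a (Suc i) * B ^ i) = c 0 + B * (\<Sum>i<D. c (Suc i) * B ^ i)"
    using Suc.prems(3) unfolding split .
  then have "(a 0 + B * (\<Sum>i<D. a (Suc i) * B ^ i)) mod B =
      (c 0 + B * (\<Sum>i<D. c (Suc i) * B ^ i)) mod B"
    by simp
  then have a0: "a 0 = c 0" using low by simp
  then have "(\<Sum>i<D. a (Suc i) * B ^ i) = (\<Sum>i<D. c (Suc i) * B ^ i)" using eq low(1) by simp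
  then have "\<forall>i<D. a (Suc i) = c (Suc i)" using Suc.prems(1,2) by (intro Suc.IH) auto
  then show ?case using a0 by (auto simp: less_Suc_eq_0_disj)
qed simp

section \<open>Shifted grids\<close>

locale grid =
  fixes a b :: real and n D :: nat and cd :: "nat \<Rightarrow> 'd::finite" and X :: "(real^'d) set"
  assumes a_less_b: "a < b" and n_pos: "0 < n" and cd_bij: "bij_betw cd {..<D} UNIV"
    and X_box: "X \<subseteq> cbox (\<chi> i. a) (\<chi> i. b)"
begin

abbreviation m :: nat where "m \<equiv> D + 1"
abbreviation r :: real where "r \<equiv> 1 / (8 * real m)"

lemma D_pos: "0 < D"
  using bij_betw_same_card[OF cd_bij] by (simp add: card_gt_0_iff)

text \<open>The coordinates are enumerated by \<open>cd\<close>; \<open>pos i j x\<close> is coordinate \<open>cd i\<close> of \<open>x\<close> in units of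
  the cell side \<open>(b - a) / n\<close>, shifted by \<open>2 - j / m\<close>, so that its integer part, which lies in
  \<open>[1, n + 2]\<close>, indexes the cell of \<open>x\<close> in the \<open>j\<close>-th shifted grid. As \<open>sigma1 (2 * s)\<close> is twice
  the distance from \<open>s\<close> to \<open>\<int>\<close>, \<open>near_int i j x\<close> is \<open>1\<close> within distance \<open>r\<close> of a cell
  boundary and \<open>0\<close> beyond distance \<open>2 r\<close>.\<close>

definition pos :: "nat \<Rightarrow> nat \<Rightarrow> real^'d \<Rightarrow> real" where
  "pos i j x = real n * (x $ cd i - a) / (b - a) + 2 - real j / real m"

definition "near_arg i j x = 2 - sigma1 (2 * pos i j x) / (2 * r)"
definition "parity_arg i j x = 1/2 + (sigma1 (pos i j x + 3/2) - 1/2) / (2 * r)"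
definition "near_int i j x = unit_clip (near_arg i j x)"
definition "parity i j x = unit_clip (parity_arg i j x)"
definition "floor_approx i j x = pos i j x - \<bar>sigma1 (pos i j x) - parity i j x\<bar>"
definition "weight j x = max 0 (1 - (\<Sum>i<D. near_int i j x))"
definition "cell_index j x = 1 + (\<Sum>i<D. floor_approx i j x * real (n + 3) ^ i)"
definition "cell_code j x = 1 + (\<Sum>i<D. nat \<lfloor>pos i j x\<rfloor> * (n + 3) ^ i)"
definition "code_bound = 1 + (\<Sum>i<D. (n + 2) * (n + 3) ^ i)"

lemma pos_bounds:
  assumes "x \<in> X" "j < m"
  shows "1 \<le> pos i j x" "pos i j x \<le> real n + 2"
proof -
  define q where "q = (x $ cd i - a) / (b - a)"
  have "a \<le> x $ cd i" "x $ cd i \<le> b" using assms(1) X_box by (auto simp: mem_box_cart)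
  then have "0 \<le> q" "q \<le> 1" unfolding q_def using a_less_b by (auto simp: field_simps)
  then have "0 \<le> real n * q" "real n * q \<le> real n" by (auto simp: mult_left_le)
  moreover have "0 \<le> real j / real m" "real j / real m < 1" using assms(2) by auto
  moreover have "pos i j x = real n * q + 2 - real j / real m" unfolding pos_def q_def by simp
  ultimately show "1 \<le> pos i j x" "pos i j x \<le> real n + 2" by linarith+
qed

lemma pos_shift: "pos i j1 x - pos i j2 x = (real j2 - real j1) / real m"
  unfolding pos_def by (simp add: diff_divide_distrib)

lemma weight_bounds: "0 \<le> weight j x" "weight j x \<le> 1"
  unfolding weight_def near_int_def using unit_clip_bounds by (auto intro: sum_nonneg)

lemma near_int_shift_unique:
  assumes "j1 < m" "j2 < m" "0 < near_int i j1 x" "0 < near_int i j2 x"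
  shows "j1 = j2"
proof (rule ccontr)
  have near: "\<exists>z::int. \<bar>pos i j x - of_int z\<bar> < 1 / (4 * real m)" if pos: "0 < near_int i j x" for j
  proof -
    obtain z :: int where "\<bar>pos i j x - of_int z\<bar> < 2 * r"
      using near_integer_if_clip_pos[of r "pos i j x"] pos
      unfolding near_int_def near_arg_def by auto
    moreover have "2 * r = 1 / (4 * real m)" by (simp add: field_simps)
    ultimately show ?thesis by auto
  qed
  obtain z1 z2 where
    "\<bar>pos i j1 x - of_int z1\<bar> < 1 / (4 * real m)" "\<bar>pos i j2 x - of_int z2\<bar> < 1 / (4 * real m)"
    using near assms(3,4) by blast
  moreover assume "j1 \<noteq> j2"
  ultimately show False
    using shifted_points_not_both_near_integers[OF _ assms(2) _ _ pos_shift]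
      shifted_points_not_both_near_integers[OF _ assms(1) _ _ pos_shift]
    by (metis linorder_neqE_nat)
qed

text \<open>Pigeonhole: each of the \<open>D\<close> coordinates is near the cell boundary in at most one of the
  \<open>D + 1\<close> shifted grids.\<close>

lemma exists_clean_shift: "\<exists>j<m. \<forall>i<D. near_int i j x = 0"
proof (rule ccontr)
  define bad where "bad i = {j. j < m \<and> 0 < near_int i j x}" for i
  assume "\<not> (\<exists>j<m. \<forall>i<D. near_int i j x = 0)"
  then have cover: "{..<m} \<subseteq> (\<Union>i<D. bad i)"
    using unit_clip_bounds unfolding bad_def near_int_def by (force simp: order.order_iff_strict)
  have "card (bad i) \<le> Suc 0" for i
    unfolding bad_def using near_int_shift_unique by (subst card_le_Suc0_iff_eq) auto
  then have "(\<Sum>i<D. card (bad i)) \<le> D"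
    using sum_mono[of "{..<D}" "\<lambda>i. card (bad i)" "\<lambda>_. 1"] by simp
  moreover have "m \<le> card (\<Union>i<D. bad i)" using card_mono[OF _ cover] by (simp add: bad_def)
  moreover have "card (\<Union>i<D. bad i) \<le> (\<Sum>i<D. card (bad i))" by (rule card_UN_le) simp
  ultimately show False by simp
qed

lemma weight_sum_ge_1: "1 \<le> (\<Sum>j<m. weight j x)"
proof -
  obtain j0 where j0: "j0 < m" "\<forall>i<D. near_int i j0 x = 0" using exists_clean_shift by blast
  then have "weight j0 x = 1" unfolding weight_def by simp
  moreover have "weight j0 x \<le> (\<Sum>j<m. weight j x)"
    using j0(1) weight_bounds by (intro member_le_sum) auto
  ultimately show ?thesis by simp
qed

lemma weight_sum_le_m: "(\<Sum>j<m. weight j x) \<le> real m"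
  using sum_bounded_above[of "{..<m}" "\<lambda>j. weight j x" 1] weight_bounds(2) by simp

lemma inv_weight_sum_bounds: "0 \<le> 1 / (\<Sum>j<m. weight j x)" "1 / (\<Sum>j<m. weight j x) \<le> 1"
  using weight_sum_ge_1[of x] by (simp_all add: divide_le_eq_1)

lemma floor_approx_eq:
  assumes "0 < weight j x" "i < D"
  shows "floor_approx i j x = of_int \<lfloor>pos i j x\<rfloor>"
proof -
  have "near_int i j x \<le> (\<Sum>i<D. near_int i j x)"
    using assms(2) unit_clip_bounds unfolding near_int_def by (intro member_le_sum) auto
  also have "\<dots> < 1" using assms(1) unfolding weight_def by linarith
  finally show ?thesis
    using floor_from_waves[of r "pos i j x"]
    unfolding floor_approx_def parity_def parity_arg_def near_int_def near_arg_def by simp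
qed

lemma floor_pos_bounds:
  assumes "x \<in> X" "j < m"
  shows "1 \<le> \<lfloor>pos i j x\<rfloor>" "\<lfloor>pos i j x\<rfloor> \<le> int n + 2"
  using pos_bounds[OF assms, of i] by (auto simp: le_floor_iff floor_le_iff)

lemma cell_index_eq_code:
  assumes "x \<in> X" "j < m" "0 < weight j x"
  shows "cell_index j x = real (cell_code j x)"
proof -
  have "floor_approx i j x = real (nat \<lfloor>pos i j x\<rfloor>)" if "i < D" for i
    using floor_approx_eq[OF assms(3) that] floor_pos_bounds[OF assms(1,2), of i] by simp
  then show ?thesis unfolding cell_index_def cell_code_def by simp
qed

lemma cell_code_bounds:
  assumes "x \<in> X" "j < m"
  shows "cell_code j x \<in> {1..code_bound}"
proof -
  have "nat \<lfloor>pos i j x\<rfloor> \<le> n + 2" for i using floor_pos_bounds[OF assms, of i] by linarith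
  then have "(\<Sum>i<D. nat \<lfloor>pos i j x\<rfloor> * (n + 3) ^ i) \<le> (\<Sum>i<D. (n + 2) * (n + 3) ^ i)"
    by (intro sum_mono mult_right_mono) auto
  then show ?thesis unfolding cell_code_def code_bound_def by simp
qed

lemma cell_code_eq_imp_coord_close:
  assumes x: "x \<in> X" "x' \<in> X" and j: "j < m" and eq: "cell_code j x = cell_code j x'" and i: "i < D"
  shows "\<bar>x $ cd i - x' $ cd i\<bar> < (b - a) / real n"
proof -
  have digit: "\<forall>i<D. nat \<lfloor>pos i j y\<rfloor> < n + 3" if "y \<in> X" for y
  proof (intro allI impI)
    fix i show "nat \<lfloor>pos i j y\<rfloor> < n + 3" using floor_pos_bounds(2)[OF that j, of i] by linarith
  qed
  have "nat \<lfloor>pos i j x\<rfloor> = nat \<lfloor>pos i j x'\<rfloor>"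
    using base_expansion_inj[OF digit[OF x(1)] digit[OF x(2)]] eq i unfolding cell_code_def by simp
  then have "\<lfloor>pos i j x\<rfloor> = \<lfloor>pos i j x'\<rfloor>"
    using floor_pos_bounds(1)[OF x(1) j, of i] floor_pos_bounds(1)[OF x(2) j, of i]
    by (metis eq_nat_nat_iff order_trans zero_le_one)
  then have "\<bar>pos i j x - pos i j x'\<bar> < 1" by linarith
  moreover have
    "pos i j x - pos i j x' =
      real n * (x $ cd i - a) / (b - a) - real n * (x' $ cd i - a) / (b - a)"
    unfolding pos_def by simp
  then have "pos i j x - pos i j x' = real n * (x $ cd i - x' $ cd i) / (b - a)"
    by (simp add: diff_divide_distrib[symmetric] algebra_simps)
  ultimately have "real n * \<bar>x $ cd i - x' $ cd i\<bar> / (b - a) < 1"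
    using a_less_b by (simp add: abs_mult)
  then show ?thesis using a_less_b n_pos by (simp add: field_simps)
qed

lemma cell_code_eq_imp_dist:
  assumes "x \<in> X" "x' \<in> X" "j < m" "cell_code j x = cell_code j x'"
  shows "dist x x' < real D * (b - a) / real n"
proof -
  have "dist x x' \<le> (\<Sum>k\<in>UNIV. \<bar>(x - x') $ k\<bar>)" unfolding dist_norm by (rule norm_le_l1_cart)
  also have "\<dots> = (\<Sum>i<D. \<bar>(x - x') $ cd i\<bar>)" by (rule sum.reindex_bij_betw[OF cd_bij, symmetric])
  also have "\<dots> < (\<Sum>i<D. (b - a) / real n)"
    using cell_code_eq_imp_coord_close[OF assms] D_pos by (intro sum_strict_mono) auto
  finally show ?thesis by simp
qed


lemma exists_cell_table:
  fixes g :: "real^'d \<Rightarrow> real"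
  assumes unit: "\<forall>x\<in>X. 0 \<le> g x \<and> g x \<le> 1"
    and close: "\<And>x x'. x \<in> X \<Longrightarrow> x' \<in> X \<Longrightarrow> dist x x' < real D * (b - a) / real n \<Longrightarrow> \<bar>g x - g x'\<bar> < e"
  obtains \<alpha> where "\<And>j K. 0 \<le> \<alpha> j K \<and> \<alpha> j K \<le> 1"
    "\<And>j x. j < m \<Longrightarrow> x \<in> X \<Longrightarrow> \<bar>\<alpha> j (cell_code j x) - g x\<bar> < e"
proof
  define rep where "rep j K = (SOME x. x \<in> X \<and> cell_code j x = K)" for j K
  have rep: "rep j K \<in> X" "cell_code j (rep j K) = K" if "\<exists>x\<in>X. cell_code j x = K" for j K
    using someI_ex[of "\<lambda>x. x \<in> X \<and> cell_code j x = K"] that unfolding rep_def by blast+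
  define \<alpha> where "\<alpha> j K = (if \<exists>x\<in>X. cell_code j x = K then g (rep j K) else 0)" for j K
  show "0 \<le> \<alpha> j K \<and> \<alpha> j K \<le> 1" for j K using rep unit unfolding \<alpha>_def by auto
  show "\<bar>\<alpha> j (cell_code j x) - g x\<bar> < e" if "j < m" "x \<in> X" for j x
  proof -
    have ex: "\<exists>y\<in>X. cell_code j y = cell_code j x" using that by blast
    then have "dist (rep j (cell_code j x)) x < real D * (b - a) / real n"
      using rep[OF ex] that by (intro cell_code_eq_imp_dist) auto
    then show ?thesis using close rep[OF ex] that ex unfolding \<alpha>_def by simp
  qed
qed

end

context grid
begin

definition "waves = (\<Union>i<D. \<Union>j<m. {\<lambda>x. sigma1 (pos i j x), \<lambda>x. sigma1 (pos i j x + 3/2),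
  \<lambda>x. sigma1 (2 * pos i j x), pos i j})"

definition "clipped = (\<Union>i<D. \<Union>j<m. {near_int i j, parity i j, \<lambda>x. sigma1 (pos i j x), pos i j})"

lemma pos_input_affine: "affine_readout UNIV X (\<lambda>x k. x $ k) (pos i j)"
proof -
  have "affine_readout UNIV X (\<lambda>x k. x $ k)
      (\<lambda>x. real n * (x $ cd i - a) / (b - a) + 2 - real j / real m)"
    using affine_readout_component[of UNIV "cd i" X "\<lambda>x k. x $ k"]
    by (intro affine_readout_intros) auto
  then show ?thesis unfolding pos_def[abs_def] .
qed

lemma pos_carry:
  assumes "affine_readout I X h (\<lambda>x. act (pos i j x / (real n + 3)))" "j < m"
  shows "affine_readout I X h (pos i j)"
proof -
  have "0 \<le> pos i j x \<and> pos i j x \<le> real n + 3" if "x \<in> X" for x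
    using pos_bounds[OF that assms(2), of i] by linarith
  then show ?thesis using assms(1) by (rule_tac affine_readout_act_scaled) auto
qed

lemma waves_layer:
  assumes "4 * D * m \<le> N"
  shows "readable N X 0 waves"
proof -
  let ?rd = "affine_readout {..<N} X"
  define pre :: "nat \<times> nat \<Rightarrow> (real^'d \<Rightarrow> real) list" where
    "pre = (\<lambda>(i, j). [pos i j, \<lambda>x. pos i j x + 3/2, \<lambda>x. 2 * pos i j x,
      \<lambda>x. pos i j x / (real n + 3)])"
  obtain h where h: "hidden_layer N h 0"
      "\<And>k g. k \<in> {..<D} \<times> {..<m} \<Longrightarrow> g \<in> set (pre k) \<Longrightarrow> ?rd h (\<lambda>x. act (g x))"
    by (rule first_layer_lists[where K="{..<D} \<times> {..<m}" and gs=pre and s=4 and N=N])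
      (use assms in \<open>auto simp: pre_def intro!: affine_readout_intros pos_input_affine\<close>)
  have "?rd h f" if "i < D" "j < m" "f \<in> {\<lambda>x. sigma1 (pos i j x), \<lambda>x. sigma1 (pos i j x + 3/2),
      \<lambda>x. sigma1 (2 * pos i j x), pos i j}" for i j f
  proof -
    have act: "?rd h (\<lambda>x. act (g x))" if "g \<in> set (pre (i, j))" for g
      by (rule h(2)) (use that \<open>i < D\<close> \<open>j < m\<close> in simp_all)
    have "\<forall>x\<in>X. 0 \<le> pos i j x" using pos_bounds(1)[OF _ \<open>j < m\<close>, of _ i] by fastforce
    then show ?thesis
      using that(3) act[THEN affine_readout_act_nonneg] pos_carry[OF act \<open>j < m\<close>]
      by (auto simp: pre_def)
  qed
  then show ?thesis unfolding readable_def waves_def using h(1) by blast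
qed

lemma clip_args_bounded:
  "\<bar>near_arg i j x\<bar> \<le> 8 * real m + 2" "\<bar>near_arg i j x - 1\<bar> \<le> 8 * real m + 2"
  "\<bar>parity_arg i j x\<bar> \<le> 8 * real m + 2" "\<bar>parity_arg i j x - 1\<bar> \<le> 8 * real m + 2"
proof -
  have eq: "near_arg i j x = 2 - 4 * real m * sigma1 (2 * pos i j x)"
    "parity_arg i j x = 1/2 + 4 * real m * sigma1 (pos i j x + 3/2) - 2 * real m"
    unfolding near_arg_def parity_arg_def by (simp_all add: field_simps)
  have wave: "0 \<le> 4 * real m * sigma1 y" "4 * real m * sigma1 y \<le> 4 * real m" for y
    using sigma1_bounds[of y] by (simp_all add: mult_left_le)
  show "\<bar>near_arg i j x\<bar> \<le> 8 * real m + 2" "\<bar>near_arg i j x - 1\<bar> \<le> 8 * real m + 2"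
    "\<bar>parity_arg i j x\<bar> \<le> 8 * real m + 2" "\<bar>parity_arg i j x - 1\<bar> \<le> 8 * real m + 2"
    unfolding abs_le_iff eq using wave[of "2 * pos i j x"] wave[of "pos i j x + 3/2"] by linarith+
qed

lemma clip_layer:
  assumes "readable N X l waves" "6 * D * m \<le> N"
  shows "readable N X (Suc l) clipped"
proof -
  let ?rd = "affine_readout {..<N} X"
  define B where "B = 8 * real m + 2"
  obtain h where h: "hidden_layer N h l" "\<And>i j. i < D \<Longrightarrow> j < m \<Longrightarrow> ?rd h (\<lambda>x. sigma1 (pos i j x))
      \<and> ?rd h (\<lambda>x. sigma1 (pos i j x + 3/2)) \<and> ?rd h (\<lambda>x. sigma1 (2 * pos i j x)) \<and> ?rd h (pos i j)"
    using assms(1) unfolding readable_def waves_def by auto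
  define pre :: "nat \<times> nat \<Rightarrow> (real^'d \<Rightarrow> real) list" where
    "pre = (\<lambda>(i, j). [\<lambda>x. near_arg i j x / B + 2, \<lambda>x. (near_arg i j x - 1) / B + 2,
      \<lambda>x. parity_arg i j x / B + 2, \<lambda>x. (parity_arg i j x - 1) / B + 2,
      \<lambda>x. sigma1 (pos i j x), \<lambda>x. pos i j x / (real n + 3)])"
  obtain h' where h': "hidden_layer N h' (Suc l)"
      "\<And>k g. k \<in> {..<D} \<times> {..<m} \<Longrightarrow> g \<in> set (pre k) \<Longrightarrow> ?rd h' (\<lambda>x. act (g x))"
    by (rule next_layer_lists[where K="{..<D} \<times> {..<m}" and gs=pre and s=6 and C="{}", OF h(1)])
      (use assms(2) h(2) in \<open>auto simp: pre_def near_arg_def[abs_def] parity_arg_def[abs_def]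
        intro!: affine_readout_intros\<close>)
  have "?rd h' f"
    if "i < D" "j < m" "f \<in> {near_int i j, parity i j, \<lambda>x. sigma1 (pos i j x), pos i j}"
    for i j f
  proof -
    have act: "?rd h' (\<lambda>x. act (g x))" if "g \<in> set (pre (i, j))" for g
      by (rule h'(2)) (use that \<open>i < D\<close> \<open>j < m\<close> in simp_all)
    have "0 < B" unfolding B_def by simp
    then have "?rd h' (near_int i j)" "?rd h' (parity i j)"
      unfolding near_int_def[abs_def] parity_def[abs_def]
      by (simp_all only: unit_clip_act[OF clip_args_bounded(1,2) [folded B_def]]
          unit_clip_act[OF clip_args_bounded(3,4) [folded B_def]])
        (intro affine_readout_intros act; simp add: pre_def)+
    moreover have "?rd h' (\<lambda>x. sigma1 (pos i j x))"
      by (rule affine_readout_act_unit[OF act]) (simp_all add: pre_def sigma1_bounds)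
    moreover have "?rd h' (pos i j)" by (rule pos_carry[OF act \<open>j < m\<close>]) (simp add: pre_def)
    ultimately show ?thesis using that(3) by auto
  qed
  then show ?thesis unfolding readable_def clipped_def using h'(1) by blast
qed

lemma weight_eq_abs:
  "weight j x = ((1 - (\<Sum>i<D. near_int i j x)) + \<bar>1 - (\<Sum>i<D. near_int i j x)\<bar>) / 2"
  unfolding weight_def by (simp add: max_def)

lemma cell_layer:
  assumes "readable N X l clipped" "4 * D * m \<le> N"
  shows "readable N X (Suc l) (cell_index ` {..<m} \<union> weight ` {..<m})"
proof -
  let ?rd = "affine_readout {..<N} X"
  let ?S = "\<lambda>j x. \<Sum>i<D. near_int i j x"
  obtain h where h: "hidden_layer N h l" "\<And>i j. i < D \<Longrightarrow> j < m \<Longrightarrow> ?rd h (near_int i j)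
      \<and> ?rd h (parity i j) \<and> ?rd h (\<lambda>x. sigma1 (pos i j x)) \<and> ?rd h (pos i j)"
    using assms(1) unfolding readable_def clipped_def by auto
  define pre :: "nat \<times> nat \<Rightarrow> (real^'d \<Rightarrow> real) list" where
    "pre = (\<lambda>(i, j). [\<lambda>x. sigma1 (pos i j x) - parity i j x + 2, \<lambda>x. pos i j x / (real n + 3),
      \<lambda>x. (1 - ?S j x) / (real D + 1) + 2, near_int i j])"
  obtain h' where h': "hidden_layer N h' (Suc l)"
      "\<And>k g. k \<in> {..<D} \<times> {..<m} \<Longrightarrow> g \<in> set (pre k) \<Longrightarrow> ?rd h' (\<lambda>x. act (g x))"
    by (rule next_layer_lists[where K="{..<D} \<times> {..<m}" and gs=pre and s=4 and C="{}", OF h(1)])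
      (use assms(2) h(2) in \<open>auto simp: pre_def intro!: affine_readout_intros\<close>)
  have act: "?rd h' (\<lambda>x. act (g x))" if "i < D" "j < m" "g \<in> set (pre (i, j))" for i j g
    by (rule h'(2)) (use that in simp_all)
  have "?rd h' (floor_approx i j)" if "i < D" "j < m" for i j
  proof -
    have "?rd h' (\<lambda>x. pos i j x - act (sigma1 (pos i j x) - parity i j x + 2))"
      by (intro affine_readout_intros act[OF that] pos_carry[OF act[OF that]] that)
        (simp_all add: pre_def)
    moreover have "\<bar>sigma1 (pos i j x) - parity i j x\<bar> \<le> 1" for x
      using sigma1_bounds[of "pos i j x"] unit_clip_bounds[of "parity_arg i j x"]
      unfolding parity_def by auto
    ultimately show ?thesis by (elim affine_readout_cong) (simp add: floor_approx_def act_abs_unit)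
  qed
  then have "?rd h' (cell_index j)" if "j < m" for j
    unfolding cell_index_def[abs_def] using that by (intro affine_readout_intros) auto
  moreover have "?rd h' (weight j)" if "j < m" for j
  proof -
    have near: "?rd h' (near_int i j)" if "i < D" for i
      by (rule affine_readout_act_unit[OF act[OF that \<open>j < m\<close>]])
        (simp add: pre_def, simp add: near_int_def unit_clip_bounds)
    have "\<bar>1 - ?S j x\<bar> \<le> real D + 1" for x
      using sum_bounded_above[of "{..<D}" "\<lambda>i. near_int i j x" 1]
        sum_nonneg[of "{..<D}" "\<lambda>i. near_int i j x"]
        unit_clip_bounds unfolding near_int_def by auto
    moreover have
      "?rd h' (\<lambda>x. ((1 - ?S j x) + (real D + 1) * act ((1 - ?S j x) / (real D + 1) + 2)) / 2)"
      by (intro affine_readout_intros act[OF D_pos that] near) (simp_all add: pre_def)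
    ultimately show ?thesis by (elim affine_readout_cong) (simp add: weight_eq_abs act_abs)
  qed
  ultimately show ?thesis unfolding readable_def using h'(1) by blast
qed

lemma floor_layers:
  assumes "6 * D * m \<le> N"
  shows "readable N X 2 (cell_index ` {..<m} \<union> weight ` {..<m})"
proof -
  have "4 * D * m \<le> N" using assms by simp
  then show ?thesis using cell_layer[OF clip_layer[OF waves_layer assms]]
    by (simp add: numeral_2_eq_2)
qed

end

locale table_grid = grid +
  fixes rate freq offset :: "nat \<Rightarrow> real"
  assumes rate_pos: "0 < rate j" and offset_ge: "2 * \<bar>freq j\<bar> \<le> offset j"
begin

definition "lookup j x = act (2 * freq j * (1 + act (- (rate j * cell_index j x))) + offset j)"
definition "blend x = (\<Sum>j<m. weight j x * lookup j x) / (\<Sum>j<m. weight j x)"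

lemma cell_index_ge_1:
  assumes "x \<in> X" "j < m"
  shows "1 \<le> cell_index j x"
proof -
  have "0 \<le> floor_approx i j x" for i
    using pos_bounds(1)[OF assms, of i] sigma1_bounds[of "pos i j x"]
      unit_clip_bounds[of "parity_arg i j x"]
    unfolding floor_approx_def parity_def by auto
  then show ?thesis unfolding cell_index_def by (simp add: sum_nonneg)
qed

lemma lookup_bounds:
  assumes "x \<in> X" "j < m"
  shows "0 \<le> lookup j x" "lookup j x \<le> 1"
proof -
  have pos: "0 \<le> rate j * cell_index j x" using rate_pos[of j] cell_index_ge_1[OF assms] by simp
  then have "0 < 1 + act (- (rate j * cell_index j x))" "1 + act (- (rate j * cell_index j x)) \<le> 1"
    by (simp_all add: act_neg_recip)
  then have "\<bar>freq j * (1 + act (- (rate j * cell_index j x)))\<bar> \<le> \<bar>freq j\<bar>"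
    by (simp add: abs_mult mult_left_le)
  then have "0 \<le> 2 * freq j * (1 + act (- (rate j * cell_index j x))) + offset j"
    using offset_ge[of j] by linarith
  then show "0 \<le> lookup j x" "lookup j x \<le> 1" unfolding lookup_def using act_bounds by auto
qed

lemma weighted_lookup_sum_bounds:
  assumes "x \<in> X"
  shows "0 \<le> (\<Sum>j<m. weight j x * lookup j x)" "(\<Sum>j<m. weight j x * lookup j x) \<le> (\<Sum>j<m. weight j x)"
  using assms weight_bounds lookup_bounds
    by (intro sum_nonneg sum_mono mult_nonneg_nonneg mult_left_le; simp)+

lemma blend_bounds: "x \<in> X \<Longrightarrow> 0 \<le> blend x \<and> blend x \<le> 1"
  using weighted_lookup_sum_bounds[of x] weight_sum_ge_1[of x] unfolding blend_def
  by (simp add: divide_le_eq_1)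

lemma lookup_layers:
  assumes "readable N X l (cell_index ` {..<m} \<union> weight ` {..<m})" "2 * m + 1 \<le> N"
  shows "readable N X (l + 2)
    (weight ` {..<m} \<union> lookup ` {..<m} \<union> {\<lambda>x. 1 / (\<Sum>j<m. weight j x)})"
proof -
  let ?rd = "affine_readout {..<N} X"
  let ?S = "\<lambda>x. \<Sum>j<m. weight j x"
  obtain h where h: "hidden_layer N h l" "\<And>j. j < m \<Longrightarrow> ?rd h (cell_index j) \<and> ?rd h (weight j)"
    using assms(1) unfolding readable_def by auto
  have weight_carry: "?rd h' (weight j)" if "?rd h' (\<lambda>x. act (weight j x))" for h' j
    using that by (rule affine_readout_act_unit) (simp add: weight_bounds)
  define pre1 where "pre1 j = [\<lambda>x. - (rate j * cell_index j x), weight j]" for j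
  obtain h1 where h1: "hidden_layer N h1 (Suc l)"
      "\<And>j g. j \<in> {..<m} \<Longrightarrow> g \<in> set (pre1 j) \<Longrightarrow> ?rd h1 (\<lambda>x. act (g x))"
      "\<And>c. c \<in> {\<lambda>x. - (?S x - 1)} \<Longrightarrow> ?rd h1 (\<lambda>x. act (c x))"
    by (rule next_layer_lists[where K="{..<m}" and gs=pre1 and s=2 and C="{\<lambda>x. - (?S x - 1)}",
          OF h(1)])
      (use assms(2) h(2) in \<open>auto simp: pre1_def intro!: affine_readout_intros\<close>)
  have inv1: "?rd h1 (\<lambda>x. 1 / ?S x)"
  proof -
    have "?rd h1 (\<lambda>x. 1 + act (- (?S x - 1)))" using h1(3) by (intro affine_readout_intros) simp
    moreover have "1 + act (- (?S x - 1)) = 1 / ?S x" for x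
      using act_neg_recip[of "?S x - 1"] weight_sum_ge_1[of x] by simp
    ultimately show ?thesis by simp
  qed
  define pre2 where
    "pre2 j = [\<lambda>x. 2 * freq j * (1 + act (- (rate j * cell_index j x))) + offset j, weight j]" for j
  obtain h2 where h2: "hidden_layer N h2 (Suc (Suc l))"
      "\<And>j g. j \<in> {..<m} \<Longrightarrow> g \<in> set (pre2 j) \<Longrightarrow> ?rd h2 (\<lambda>x. act (g x))"
      "\<And>c. c \<in> {\<lambda>x. 1 / ?S x} \<Longrightarrow> ?rd h2 (\<lambda>x. act (c x))"
    by (rule next_layer_lists[where K="{..<m}" and gs=pre2 and s=2 and C="{\<lambda>x. 1 / ?S x}",
          OF h1(1)])
      (use assms(2) h1(2)[unfolded pre1_def] inv1 weight_carry[OF h1(2)[unfolded pre1_def]]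
        in \<open>auto simp: pre2_def intro!: affine_readout_intros\<close>)
  have "?rd h2 (lookup j)" "?rd h2 (weight j)" if "j < m" for j
    using h2(2)[unfolded pre2_def, of j] that unfolding lookup_def[abs_def]
    by (auto intro: weight_carry)
  moreover have "?rd h2 (\<lambda>x. 1 / ?S x)"
  proof (rule affine_readout_act_unit)
    show "\<forall>x\<in>X. 0 \<le> 1 / ?S x \<and> 1 / ?S x \<le> 1" using inv_weight_sum_bounds by blast
  qed (use h2(3) in simp)
  ultimately show ?thesis unfolding readable_def add_2_eq_Suc' using h2(1) by blast
qed

lemma average_layers:
  assumes "readable N X l (weight ` {..<m} \<union> lookup ` {..<m} \<union> {\<lambda>x. 1 / (\<Sum>j<m. weight j x)})"
    and width: "7 * m + 1 \<le> N"
  shows "readable N X (l + 4) {blend}"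
proof -
  let ?S = "\<lambda>x. \<Sum>j<m. weight j x"
  let ?P = "\<lambda>x. (\<Sum>j<m. weight j x * lookup j x) / real m"
  have "0 \<le> ?P x \<and> ?P x \<le> 1" if "x \<in> X" for x
    using weighted_lookup_sum_bounds[OF that] weight_sum_le_m[of x] by (simp add: divide_le_eq_1)
  then have unit: "\<forall>x\<in>X. 0 \<le> 1 / ?S x \<and> 1 / ?S x \<le> 1" "\<forall>x\<in>X. 0 \<le> ?P x \<and> ?P x \<le> 1"
    using inv_weight_sum_bounds by auto
  have "readable N X (l + 2) ((\<lambda>j x. weight j x * lookup j x) ` {..<m} \<union> {\<lambda>x. 1 / ?S x})"
    using assms(1) by (rule readable_products) (use width unit weight_bounds lookup_bounds in auto)
  then have "readable N X (l + 2) ((\<lambda>_. ?P) ` {()} \<union> (\<lambda>_ x. 1 / ?S x) ` {()} \<union> {})"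
    by (rule readable_closure) (auto intro!: affine_readout_intros)
  then have "readable N X (l + 2 + 2) ((\<lambda>_ x. ?P x * (1 / ?S x)) ` {()} \<union> {})"
    by (rule readable_products) (use width unit in auto)
  then have "readable N X (l + 2 + 2) {blend}"
  proof (rule readable_closure)
    fix h assume "\<forall>f\<in>(\<lambda>_ x. ?P x * (1 / ?S x)) ` {()} \<union> {}. affine_readout {..<N} X h f"
    then have "affine_readout {..<N} X h (\<lambda>x. real m * (?P x * (1 / ?S x)))"
      using affine_readout_scale by blast
    moreover have "real m * (?P x * (1 / ?S x)) = blend x" for x unfolding blend_def by simp
    ultimately show "\<forall>g\<in>{blend}. affine_readout {..<N} X h g" by simp
  qed
  then show ?thesis by (simp add: eval_nat_numeral)
qed

lemma blend_network:
  assumes width: "7 * m * m \<le> N" and depth: "9 \<le> L"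
  shows "\<exists>\<psi>\<in>H N L. \<forall>x\<in>X. \<psi> x = blend x"
proof -
  have w1: "6 * D * m \<le> N" and w2: "7 * m + 1 \<le> N"
    using width D_pos by (simp_all add: algebra_simps)
  have w3: "2 * m + 1 \<le> N" "1 \<le> N" using order_trans[OF _ w2] by simp_all
  have "readable N X (2 + 2)
      (weight ` {..<m} \<union> lookup ` {..<m} \<union> {\<lambda>x. 1 / (\<Sum>j<m. weight j x)})"
    by (rule lookup_layers[OF floor_layers[OF w1] w3(1)])
  then have "readable N X (2 + 2 + 4) {blend}" by (rule average_layers[OF _ w2])
  then have "readable N X (L - 1) {blend}"
    by (rule readable_carry) (use w3(2) blend_bounds depth in auto)
  then show ?thesis by (rule readable_output)
qed

lemma blend_error:
  assumes x: "x \<in> X"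
    and table: "\<And>j K. j < m \<Longrightarrow> K \<in> {1..code_bound} \<Longrightarrow>
      \<bar>act (2 * freq j * (1 + act (- (rate j * real K))) + offset j) - \<alpha> j K\<bar> < \<delta>"
    and codes: "\<And>j. j < m \<Longrightarrow> \<bar>\<alpha> j (cell_code j x) - y\<bar> \<le> e"
  shows "\<bar>blend x - y\<bar> \<le> \<delta> + e"
proof -
  let ?S = "\<Sum>j<m. weight j x"
  have each: "weight j x * \<bar>lookup j x - y\<bar> \<le> weight j x * (\<delta> + e)" if j: "j < m" for j
  proof (cases "0 < weight j x")
    case True
    then have "lookup j x = act (2 * freq j * (1 + act (- (rate j * real (cell_code j x)))) +
        offset j)"
      by (simp add: lookup_def cell_index_eq_code[OF x j True])
    then have "\<bar>lookup j x - \<alpha> j (cell_code j x)\<bar> < \<delta>" using table[OF j cell_code_bounds[OF x j]]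
      by simp
    then have "\<bar>lookup j x - y\<bar> \<le> \<delta> + e" using codes[OF j] by linarith
    then show ?thesis using weight_bounds(1) by (rule mult_left_mono)
  next
    case False
    then show ?thesis using weight_bounds(1)[of j x] by simp
  qed
  have S: "0 < ?S" using weight_sum_ge_1[of x] by simp
  have "blend x - y = (\<Sum>j<m. weight j x * (lookup j x - y)) / ?S"
    using S unfolding blend_def by (simp add: field_simps sum_subtractf sum_distrib_left)
  then have "\<bar>blend x - y\<bar> = \<bar>\<Sum>j<m. weight j x * (lookup j x - y)\<bar> / ?S" using S by simp
  also have "\<dots> \<le> (\<Sum>j<m. weight j x * \<bar>lookup j x - y\<bar>) / ?S"
    using S weight_bounds(1)
      by (intro divide_right_mono order_trans[OF sum_abs] sum_mono) (auto simp: abs_mult)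
  also have "\<dots> \<le> (\<Sum>j<m. weight j x * (\<delta> + e)) / ?S"
    using S each by (intro divide_right_mono sum_mono) auto
  also have "\<dots> = \<delta> + e" using S by (simp add: sum_distrib_right[symmetric])
  finally show ?thesis .
qed

end

lemma uniformly_continuous_on_grid_size:
  assumes "uniformly_continuous_on S g" "0 < e"
  obtains n :: nat where "0 < n"
    "\<And>x x'. x \<in> S \<Longrightarrow> x' \<in> S \<Longrightarrow> dist x x' < c / real n \<Longrightarrow> dist (g x) (g x') < e"
proof -
  obtain du where du: "0 < du" "\<And>x x'. x \<in> S \<Longrightarrow> x' \<in> S \<Longrightarrow> dist x' x < du \<Longrightarrow> dist (g x') (g x) < e"
    using assms unfolding uniformly_continuous_on_def by metis
  define n where "n = nat \<lceil>c / du\<rceil> + 1"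
  have "c / du < real n" unfolding n_def by linarith
  then have "c / real n < du" using du(1) by (simp add: field_simps n_def)
  then show thesis using du(2) by (intro that[of n]) (auto simp: n_def dist_commute)
qed

theorem unit_valued_approximation:
  fixes g :: "real^'d::finite \<Rightarrow> real"
  assumes "a < b" and width: "7 * (CARD('d) + 1) * (CARD('d) + 1) \<le> N" and depth: "9 \<le> L"
    and cont: "continuous_on (cbox (\<chi> i. a) (\<chi> i. b)) g"
    and unit: "\<forall>x\<in>cbox (\<chi> i. a) (\<chi> i. b). 0 \<le> g x \<and> g x \<le> 1" and "0 < \<eta>"
  shows "\<exists>\<psi>\<in>H N L. \<forall>x\<in>cbox (\<chi> i. a) (\<chi> i. b). \<bar>g x - \<psi> x\<bar> < \<eta>"
proof -
  define X where "X = cbox (\<chi> i. a) (\<chi> i. b :: real^'d)"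
  obtain n where n: "0 < n"
    "\<And>x x'. x \<in> X \<Longrightarrow> x' \<in> X \<Longrightarrow> dist x x' < real CARD('d) * (b - a) / real n \<Longrightarrow> \<bar>g x - g x'\<bar> < \<eta> / 2"
    using uniformly_continuous_on_grid_size[OF compact_uniformly_continuous[OF cont]
        half_gt_zero[OF \<open>0 < \<eta>\<close>]]
    unfolding X_def dist_real_def by (metis compact_cbox)
  obtain cd where cd: "bij_betw cd {..<CARD('d)} (UNIV :: 'd set)"
    using ex_bij_betw_nat_finite[of "UNIV :: 'd set"] by (auto simp: atLeast0LessThan)
  interpret grid a b n "CARD('d)" cd X by unfold_locales (use \<open>a < b\<close> n(1) cd in \<open>auto simp: X_def\<close>)
  obtain \<alpha> where \<alpha>: "\<And>j K. 0 \<le> \<alpha> j K \<and> \<alpha> j K \<le> 1"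
      "\<And>j x. j < m \<Longrightarrow> x \<in> X \<Longrightarrow> \<bar>\<alpha> j (cell_code j x) - g x\<bar> < \<eta> / 2"
    using exists_cell_table[of g "\<eta> / 2"] unit n(2) unfolding X_def by blast
  have "0 < \<eta> / 4" using \<open>0 < \<eta>\<close> by simp
  then obtain rate freq offset where tab: "\<And>j. 0 < rate j" "\<And>j. 2 * \<bar>freq j\<bar> \<le> offset j"
    "\<And>j K. K \<in> {1..code_bound} \<Longrightarrow> \<bar>act (2 * freq j * (1 + act (- (rate j * real K))) + offset j) -
        \<alpha> j K\<bar> < \<eta> / 4"
    by (rule act_approximates_tables[where \<alpha>=\<alpha> and M=code_bound, OF \<alpha>(1)]) blast
  interpret table_grid a b n "CARD('d)" cd X rate freq offset by unfold_locales (use tab in auto)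
  obtain \<psi> where \<psi>: "\<psi> \<in> H N L" "\<forall>x\<in>X. \<psi> x = blend x" using blend_network[OF width depth] by blast
  have "\<bar>g x - \<psi> x\<bar> < \<eta>" if x: "x \<in> X" for x
  proof -
    have "\<bar>blend x - g x\<bar> \<le> \<eta> / 4 + \<eta> / 2"
      by (rule blend_error[OF x]) (use tab(3) \<alpha>(2)[OF _ x] in \<open>auto intro: less_imp_le\<close>)
    then show ?thesis using \<psi>(2) x \<open>0 < \<eta>\<close> by (simp add: abs_minus_commute)
  qed
  then show ?thesis using \<psi>(1) unfolding X_def by blast
qed

lemma width_le: "1 \<le> (d :: nat) \<Longrightarrow> 7 * (d + 1) * (d + 1) \<le> 36 * d * (2 * d + 1)"
  by (simp add: algebra_simps)

theorem corollary2:
  fixes a b :: real and N L :: nat and f :: "real^'d::finite \<Rightarrow> real"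
  assumes "a < b"
    and "N \<ge> 36 * CARD('d) * (2 * CARD('d) + 1)"
    and "L \<ge> 11"
    and "continuous_on (cbox (\<chi> i. a) (\<chi> i. b)) f"
    and "\<epsilon> > 0"
  shows "\<exists>\<phi>\<in>H N L. \<forall>x\<in>cbox (\<chi> i. a) (\<chi> i. b). \<bar>f x - \<phi> x\<bar> < \<epsilon>"
proof -
  let ?X = "cbox (\<chi> i. a) (\<chi> i. b :: real^'d)"
  obtain B where B: "\<forall>x\<in>?X. \<bar>f x\<bar> \<le> B"
    using compact_imp_bounded[OF compact_continuous_image[OF assms(4) compact_cbox]]
    unfolding bounded_iff by auto
  define M where "M = \<bar>B\<bar> + 1"
  have M: "0 < M" "\<forall>x\<in>?X. \<bar>f x\<bar> < M" using B unfolding M_def by force+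
  define g where "g x = (f x + M) / (2 * M)" for x
  have cont: "continuous_on ?X g" unfolding g_def
    by (intro continuous_intros assms(4)) (use M in auto)
  have unit: "\<forall>x\<in>?X. 0 \<le> g x \<and> g x \<le> 1" using M unfolding g_def
    by (auto simp: field_simps abs_less_iff)
  have width: "7 * (CARD('d) + 1) * (CARD('d) + 1) \<le> N"
    by (rule le_trans[OF width_le assms(2)]) (simp add: Suc_leI)
  have "9 \<le> L" "0 < \<epsilon> / (2 * M)" using assms(3,5) M(1) by simp_all
  then obtain \<psi> where \<psi>: "\<psi> \<in> H N L" "\<forall>x\<in>?X. \<bar>g x - \<psi> x\<bar> < \<epsilon> / (2 * M)"
    using unit_valued_approximation[OF assms(1) width _ cont unit] by blast
  have "\<forall>x\<in>?X. \<bar>f x - (2 * M * \<psi> x + - M)\<bar> < \<epsilon>"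
    using \<psi>(2) M(1) unfolding g_def by (simp add: field_simps abs_less_iff)
  moreover have "(\<lambda>x. 2 * M * \<psi> x + - M) \<in> H N L" by (rule H_affine_image[OF \<psi>(1)])
  ultimately show ?thesis by (rule bexI[where x="\<lambda>x. 2 * M * \<psi> x + - M"])
qed

end
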